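(* Let $\Gamma$ be a Lie group with a left invariant metric, $\Gamma_0\triangleleft\Gamma$ the connected component of the identity, $\Gamma_i$ a sequence of discrete groups, and $f_i:\Gamma_i\to\Gamma$ a clean discrete approximation. Let $r>0$ be such that $B_e(r,\Gamma)\subset\Gamma_0$, and for each $i$ let $G_i\leq\Gamma_i$ be the subgroup generated by $f_i^{-1}(B_e(r,\Gamma))$. Then for large enough $i$ there is a surjective group morphism $\Gamma_i/G_i\to\Gamma/\Gamma_0$.
   Context: A sequence $f_i:\Gamma_i\to\Gamma$ is a discrete approximation if there is $R_0>0$ such that for large $i$, $f_i^{-1}(B_e(R_0,\Gamma))$ generates $\Gamma_i$ and contains the identity, and for every $R,\varepsilon>0$ there is $i_0$ with, for $i\geq i_0$: $f_i^{-1}(B_e(R,\Gamma))$ is finite; $f_i(\Gamma_i)$ meets each $\varepsilon$-ball centered in $B_e(R,\Gamma)$; and $d(f_i(g_1g_2^{-1}),f_i(g_1)f_i(g_2^{-1}))\leq\varepsilon$ for $g_1,g_2\in f_i^{-1}(B_e(R,\Gamma))$. (For large $i$ the subgroup $G_i$ is normal in $\Gamma_i$, so $\Gamma_i/G_i$ is a group.) A generating subset $S$ of a group $G$ containing the identity is a determining set if $G$ has a presentation $\langle S\mid\mathcal{R}\rangle$ with all relators words of length $3$ in $S\cup S^{-1}$. The approximation is clean if there are an open generating set $S_0\subset\Gamma$, a compact $K_0\subset\Gamma$, and for large $i$ symmetric determining sets $S_i\subset\Gamma_i$ with $f_i^{-1}(S_0)\subset S_i\subset f_i^{-1}(K_0)$.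 *)

theory Defs
  imports "HOL-Analysis.Analysis" "HOL-Algebra.Coset" "HOL-Algebra.Generated_Groups"
begin

primrec Ck_on :: "nat \<Rightarrow> 'a::euclidean_space set \<Rightarrow> ('a \<Rightarrow> 'b::euclidean_space) \<Rightarrow> bool" where
  "Ck_on 0 S f = continuous_on S f"
| "Ck_on (Suc k) S f =
     ((\<forall>x\<in>S. f differentiable (at x)) \<and>
      (\<forall>i\<in>Basis. Ck_on k S (\<lambda>x. frechet_derivative f (at x) i)))"

definition Cinf_on :: "'a::euclidean_space set \<Rightarrow> ('a \<Rightarrow> 'b::euclidean_space) \<Rightarrow> bool" where
  "Cinf_on S f \<longleftrightarrow> open S \<and> (\<forall>k. Ck_on k S f)"

definition is_chart :: "('g::metric_space) set \<Rightarrow> ('g \<Rightarrow> 'e::euclidean_space) \<Rightarrow> bool" where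
  "is_chart U \<phi> \<longleftrightarrow> open U \<and> inj_on \<phi> U \<and> open (\<phi> ` U) \<and>
     continuous_on U \<phi> \<and> continuous_on (\<phi> ` U) (inv_into U \<phi>)"

definition smooth_atlas :: "('g::metric_space set \<times> ('g \<Rightarrow> 'e::euclidean_space)) set \<Rightarrow> bool" where
  "smooth_atlas A \<longleftrightarrow>
     (\<forall>(U,\<phi>)\<in>A. is_chart U \<phi>) \<and> (\<Union>(U,\<phi>)\<in>A. U) = UNIV \<and>
     (\<forall>(U,\<phi>)\<in>A. \<forall>(V,\<psi>)\<in>A. Cinf_on (\<phi> ` (U \<inter> V)) (\<psi> \<circ> inv_into U \<phi>))"

definition lie_group_modelled_on :: "'e::euclidean_space itself \<Rightarrow> ('g::metric_space) monoid \<Rightarrow> bool" where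
  "lie_group_modelled_on _ \<Gamma> \<longleftrightarrow>
     group \<Gamma> \<and> carrier \<Gamma> = UNIV \<and>
     continuous_on UNIV (\<lambda>(x,y). x \<otimes>\<^bsub>\<Gamma>\<^esub> y) \<and>
     continuous_on UNIV (\<lambda>x. inv\<^bsub>\<Gamma>\<^esub> x) \<and>
     (\<exists>A :: ('g set \<times> ('g \<Rightarrow> 'e)) set. smooth_atlas A \<and>
        (\<forall>(U1,\<phi>1)\<in>A. \<forall>(U2,\<phi>2)\<in>A. \<forall>(V,\<psi>)\<in>A.
           Cinf_on {(a,b). a \<in> \<phi>1 ` U1 \<and> b \<in> \<phi>2 ` U2 \<and>
                        inv_into U1 \<phi>1 a \<otimes>\<^bsub>\<Gamma>\<^esub> inv_into U2 \<phi>2 b \<in> V}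
                   (\<lambda>(a,b). \<psi> (inv_into U1 \<phi>1 a \<otimes>\<^bsub>\<Gamma>\<^esub> inv_into U2 \<phi>2 b))) \<and>
        (\<forall>(U,\<phi>)\<in>A. \<forall>(V,\<psi>)\<in>A.
           Cinf_on {a. a \<in> \<phi> ` U \<and> inv\<^bsub>\<Gamma>\<^esub> (inv_into U \<phi> a) \<in> V}
                   (\<lambda>a. \<psi> (inv\<^bsub>\<Gamma>\<^esub> (inv_into U \<phi> a)))))"

text \<open>Zero-dimensional Lie group: a group carried by the whole type with the discrete topology.\<close>
definition discrete_lie_group :: "('g::metric_space) monoid \<Rightarrow> bool" where
  "discrete_lie_group \<Gamma> \<longleftrightarrow> group \<Gamma> \<and> carrier \<Gamma> = UNIV \<and> (\<forall>x::'g. open {x})"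

text \<open>Lie group: either zero-dimensional, or modelled on the Euclidean space 'e
  (in the theorem 'e is a free type variable, hence arbitrary; this covers all dimensions \<ge> 1).\<close>
definition lie_group :: "'e::euclidean_space itself \<Rightarrow> ('g::metric_space) monoid \<Rightarrow> bool" where
  "lie_group E \<Gamma> \<longleftrightarrow> discrete_lie_group \<Gamma> \<or> lie_group_modelled_on E \<Gamma>"

definition left_invariant_metric :: "('g::metric_space) monoid \<Rightarrow> bool" where
  "left_invariant_metric \<Gamma> \<longleftrightarrow>
     (\<forall>g\<in>carrier \<Gamma>. \<forall>x\<in>carrier \<Gamma>. \<forall>y\<in>carrier \<Gamma>. dist (g \<otimes>\<^bsub>\<Gamma>\<^esub> x) (g \<otimes>\<^bsub>\<Gamma>\<^esub> y) = dist x y)"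

definition discrete_approximation ::
  "(nat \<Rightarrow> 'a monoid) \<Rightarrow> ('g::metric_space) monoid \<Rightarrow> (nat \<Rightarrow> 'a \<Rightarrow> 'g) \<Rightarrow> bool" where
  "discrete_approximation \<Gamma>s \<Gamma> f \<longleftrightarrow>
     (\<exists>R0>0. \<forall>\<^sub>F i in sequentially.
        generate (\<Gamma>s i) (f i -` ball \<one>\<^bsub>\<Gamma>\<^esub> R0 \<inter> carrier (\<Gamma>s i)) = carrier (\<Gamma>s i) \<and>
        \<one>\<^bsub>\<Gamma>s i\<^esub> \<in> f i -` ball \<one>\<^bsub>\<Gamma>\<^esub> R0) \<and>
     (\<forall>R>0. \<forall>\<epsilon>>0. \<forall>\<^sub>F i in sequentially.
        finite (f i -` ball \<one>\<^bsub>\<Gamma>\<^esub> R \<inter> carrier (\<Gamma>s i)) \<and>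
        (\<forall>x\<in>ball \<one>\<^bsub>\<Gamma>\<^esub> R. \<exists>g\<in>carrier (\<Gamma>s i). f i g \<in> ball x \<epsilon>) \<and>
        (\<forall>g1\<in>f i -` ball \<one>\<^bsub>\<Gamma>\<^esub> R \<inter> carrier (\<Gamma>s i).
         \<forall>g2\<in>f i -` ball \<one>\<^bsub>\<Gamma>\<^esub> R \<inter> carrier (\<Gamma>s i).
           dist (f i (g1 \<otimes>\<^bsub>\<Gamma>s i\<^esub> inv\<^bsub>\<Gamma>s i\<^esub> g2))
                (f i g1 \<otimes>\<^bsub>\<Gamma>\<^esub> f i (inv\<^bsub>\<Gamma>s i\<^esub> g2)) \<le> \<epsilon>))"

text \<open>Words in the letters S \<union> S^{-1}: a letter (s, True) stands for s, (s, False) for s^{-1}.\<close>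
definition word_eval :: "('a, 'b) monoid_scheme \<Rightarrow> ('a \<times> bool) list \<Rightarrow> 'a" where
  "word_eval G w = foldr (\<lambda>(s,b) acc. (if b then s else inv\<^bsub>G\<^esub> s) \<otimes>\<^bsub>G\<^esub> acc) w \<one>\<^bsub>G\<^esub>"

text \<open>The congruence on words generated by free reduction and by the relators R;
  its classes are the elements of the presented group \<langle>S | R\<rangle>.\<close>
inductive_set word_congruence :: "('a \<times> bool) list set \<Rightarrow> (('a \<times> bool) list \<times> ('a \<times> bool) list) set"
  for R where
  wc_refl: "(w, w) \<in> word_congruence R"
| wc_sym: "(w, v) \<in> word_congruence R \<Longrightarrow> (v, w) \<in> word_congruence R"
| wc_trans: "(u, v) \<in> word_congruence R \<Longrightarrow> (v, w) \<in> word_congruence R \<Longrightarrow> (u, w) \<in> word_congruence R"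
| wc_free: "(u @ [(s, b), (s, \<not> b)] @ v, u @ v) \<in> word_congruence R"
| wc_rel: "r \<in> R \<Longrightarrow> (u @ r @ v, u @ v) \<in> word_congruence R"

text \<open>G has the presentation \<langle>S | R\<rangle> (via the inclusion S \<subseteq> G): S generates G, the relators
  hold in G, and the kernel of the evaluation map from words is exactly the normal closure of R.\<close>
definition has_presentation :: "('a, 'b) monoid_scheme \<Rightarrow> 'a set \<Rightarrow> ('a \<times> bool) list set \<Rightarrow> bool" where
  "has_presentation G S R \<longleftrightarrow>
     S \<subseteq> carrier G \<and> generate G S = carrier G \<and>
     (\<forall>r\<in>R. set r \<subseteq> S \<times> UNIV \<and> word_eval G r = \<one>\<^bsub>G\<^esub>) \<and>
     (\<forall>w v. set w \<subseteq> S \<times> UNIV \<longrightarrow> set v \<subseteq> S \<times> UNIV \<longrightarrow>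
        word_eval G w = word_eval G v \<longrightarrow> (w, v) \<in> word_congruence R)"

definition determining_set :: "('a, 'b) monoid_scheme \<Rightarrow> 'a set \<Rightarrow> bool" where
  "determining_set G S \<longleftrightarrow>
     S \<subseteq> carrier G \<and> \<one>\<^bsub>G\<^esub> \<in> S \<and> generate G S = carrier G \<and>
     (\<exists>R. (\<forall>r\<in>R. length r = 3) \<and> has_presentation G S R)"

definition symmetric_subset :: "('a, 'b) monoid_scheme \<Rightarrow> 'a set \<Rightarrow> bool" where
  "symmetric_subset G S \<longleftrightarrow> (\<forall>s\<in>S. inv\<^bsub>G\<^esub> s \<in> S)"

definition clean_discrete_approximation ::
  "(nat \<Rightarrow> 'a monoid) \<Rightarrow> ('g::metric_space) monoid \<Rightarrow> (nat \<Rightarrow> 'a \<Rightarrow> 'g) \<Rightarrow> bool" where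
  "clean_discrete_approximation \<Gamma>s \<Gamma> f \<longleftrightarrow>
     discrete_approximation \<Gamma>s \<Gamma> f \<and>
     (\<exists>S0 K0. open S0 \<and> S0 \<subseteq> carrier \<Gamma> \<and> generate \<Gamma> S0 = carrier \<Gamma> \<and> compact K0 \<and>
        (\<forall>\<^sub>F i in sequentially. \<exists>S.
            symmetric_subset (\<Gamma>s i) S \<and> determining_set (\<Gamma>s i) S \<and>
            f i -` S0 \<inter> carrier (\<Gamma>s i) \<subseteq> S \<and> S \<subseteq> f i -` K0 \<inter> carrier (\<Gamma>s i)))"

end

theory Submission
  imports Defs
begin

text \<open>
  For large \<open>i\<close> the map \<open>f\<^sub>i\<close> is, on a large ball, a homomorphism up to an error \<open>\<epsilon>\<close>
  that is small compared with \<open>r\<close>, and \<open>B(r) \<subseteq> \<Gamma>\<^sub>0\<close> puts points at distance less than \<open>r\<close>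
  into the same component. The group \<open>\<Gamma>\<^sub>i\<close> has a presentation by relators of length 3 in the
  bounded generating set \<open>S\<^sub>i\<close>, and for each relator \<open>xyz\<close> the product \<open>f\<^sub>i(x) f\<^sub>i(y) f\<^sub>i(z)\<close>
  is within a few \<open>\<epsilon>\<close> of the identity; hence \<open>s \<mapsto> f\<^sub>i(s) \<Gamma>\<^sub>0\<close> extends to a homomorphism
  \<open>\<Gamma>\<^sub>i \<rightarrow> \<Gamma>/\<Gamma>\<^sub>0\<close>. Its image contains the components of all points of the open generating
  set \<open>S\<^sub>0\<close>, so it is onto. It kills every element with image in a small ball \<open>B(\<theta>)\<close>, and
  these elements generate \<open>G\<^sub>i\<close>: every point of \<open>B(r)\<close> is joined to the identity by a chain of
  short steps inside a bounded ball, and lifting such a chain through \<open>f\<^sub>i\<close> writes each element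
  of \<open>f\<^sub>i\<^sup>-\<^sup>1(B(r))\<close> as a product of elements of \<open>f\<^sub>i\<^sup>-\<^sup>1(B(\<theta>))\<close>. Finally \<open>G\<^sub>i\<close> is
  normal because conjugation by the generators, whose images lie in the compact set \<open>K\<^sub>0\<close>, moves
  small elements only a little.
\<close>

lemma totally_bounded_finite_net:
  fixes S :: "'a::metric_space set"
  assumes "totally_bounded S" "e > 0"
  obtains C where "finite C" "C \<subseteq> S" "S \<subseteq> (\<Union>c\<in>C. ball c e)"
proof -
  obtain k where k: "finite k" "S \<subseteq> (\<Union>x\<in>k. ball x (e / 2))"
    using assms totally_bounded_metric[of S] unfolding ball_def by (meson half_gt_zero)
  define pick where "pick x = (SOME y. y \<in> S \<inter> ball x (e / 2))" for x
  have pick: "pick x \<in> S \<inter> ball x (e / 2)" if "S \<inter> ball x (e / 2) \<noteq> {}" for x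
    unfolding pick_def using that some_in_eq[of "S \<inter> ball x (e / 2)"] by blast
  define C where "C = pick ` {x \<in> k. S \<inter> ball x (e / 2) \<noteq> {}}"
  have "finite C" "C \<subseteq> S"
    unfolding C_def using k(1) pick by auto
  moreover have "S \<subseteq> (\<Union>c\<in>C. ball c e)"
  proof
    fix y assume "y \<in> S"
    then obtain x where x: "x \<in> k" "y \<in> ball x (e / 2)"
      using k(2) by blast
    have ne: "S \<inter> ball x (e / 2) \<noteq> {}"
      using x(2) \<open>y \<in> S\<close> by blast
    then have "pick x \<in> C"
      unfolding C_def using x(1) by blast
    moreover have "dist (pick x) x < e / 2"
      using pick[OF ne] by (simp add: dist_commute)
    moreover have "dist (pick x) y \<le> dist (pick x) x + dist x y"
      by (rule dist_triangle)
    ultimately show "y \<in> (\<Union>c\<in>C. ball c e)"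
      using x(2) by force
  qed
  ultimately show thesis
    using that by blast
qed


section \<open>Metric groups and the identity component\<close>

text \<open>
  What the proof uses of a Lie group with a left-invariant metric. The last assumption makes the
  identity component open.
\<close>

locale metric_group = group G for G :: "('g::metric_space, 'b) monoid_scheme" (structure) +
  assumes carrier_UNIV: "carrier G = UNIV"
    and dist_mult_left: "dist (g \<otimes> x) (g \<otimes> y) = dist x y"
    and continuous_mult: "continuous_on UNIV (\<lambda>(x, y). x \<otimes> y)"
    and continuous_inv: "continuous_on UNIV (\<lambda>x. inv x)"
    and connected_open_nhd: "\<exists>V. open V \<and> connected V \<and> x \<in> V"
begin

definition G0 :: "'g set" where
  "G0 = connected_component_set UNIV \<one>"

lemma in_carrier [simp]: "x \<in> carrier G"
  by (simp add: carrier_UNIV)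

lemma continuous_on_group_mult [continuous_intros]:
  "continuous_on S F \<Longrightarrow> continuous_on S H \<Longrightarrow> continuous_on S (\<lambda>x. F x \<otimes> H x)"
  using continuous_on_compose2[OF continuous_mult continuous_on_Pair] by auto

lemma continuous_on_group_inv [continuous_intros]:
  "continuous_on S F \<Longrightarrow> continuous_on S (\<lambda>x. inv (F x))"
  using continuous_on_compose2[OF continuous_inv] by auto

lemma dist_inv_mult_one: "dist (inv y \<otimes> x) \<one> = dist x y"
  using dist_mult_left[of "inv y" x y] by simp

lemma dist_inv_one: "dist (inv x) \<one> = dist x \<one>"
  using dist_inv_mult_one[of x \<one>] by (simp add: dist_commute)

lemma dist_mult_right_one: "dist (x \<otimes> y) x = dist y \<one>"
  using dist_mult_left[of x y \<one>] by simp

lemma dist_mult_right: "dist (x \<otimes> z) (y \<otimes> z) = dist (inv z \<otimes> (inv y \<otimes> x) \<otimes> z) \<one>"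
  using dist_inv_mult_one[of "y \<otimes> z" "x \<otimes> z"] by (simp add: inv_mult_group m_assoc)

lemma one_in_G0: "\<one> \<in> G0"
  by (simp add: G0_def connected_component_refl)

lemma open_G0: "open G0"
  unfolding open_subopen[of G0]
proof
  fix x assume "x \<in> G0"
  obtain V where V: "open V" "connected V" "x \<in> V"
    using connected_open_nhd by blast
  have "V \<subseteq> connected_component_set UNIV x"
    using V(3,2) by (rule connected_component_maximal) simp
  also have "\<dots> = G0"
    using \<open>x \<in> G0\<close> unfolding G0_def by (rule connected_component_eq)
  finally show "\<exists>T. open T \<and> x \<in> T \<and> T \<subseteq> G0"
    using V by blast
qed

lemma image_G0_subset:
  assumes "continuous_on G0 \<phi>" "\<phi> \<one> \<in> G0"
  shows "\<phi> ` G0 \<subseteq> G0"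
proof -
  have "connected (\<phi> ` G0)"
    using assms(1) by (rule connected_continuous_image) (simp add: G0_def)
  then have "\<phi> ` G0 \<subseteq> connected_component_set UNIV (\<phi> \<one>)"
    using one_in_G0 by (intro connected_component_maximal) auto
  also have "\<dots> = G0"
    using assms(2) unfolding G0_def by (rule connected_component_eq)
  finally show ?thesis .
qed

lemma normal_G0: "G0 \<lhd> G"
proof (intro normal_invI subgroupI)
  show "G0 \<subseteq> carrier G" "G0 \<noteq> {}"
    using one_in_G0 by (auto simp: carrier_UNIV)
next
  fix a b assume "a \<in> G0" "b \<in> G0"
  moreover have "continuous_on G0 (\<lambda>x. a \<otimes> x)"
    by (intro continuous_intros)
  ultimately show "a \<otimes> b \<in> G0"
    using image_G0_subset[of "\<lambda>x. a \<otimes> x"] by auto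
next
  fix a assume "a \<in> G0"
  moreover have "continuous_on G0 (\<lambda>x. inv x)"
    by (intro continuous_intros)
  ultimately show "inv a \<in> G0"
    using image_G0_subset[of "\<lambda>x. inv x"] one_in_G0 by auto
next
  fix g a assume "a \<in> G0"
  moreover have "continuous_on G0 (\<lambda>x. g \<otimes> x \<otimes> inv g)"
    by (intro continuous_intros)
  ultimately show "g \<otimes> a \<otimes> inv g \<in> G0"
    using image_G0_subset[of "\<lambda>x. g \<otimes> x \<otimes> inv g"] one_in_G0 by auto
qed

lemma G0_subset_generate_ball:
  assumes "\<delta> > 0"
  shows "G0 \<subseteq> generate G (ball \<one> \<delta>)"
proof -
  define W where "W = generate G (ball \<one> \<delta>)"
  have W: "subgroup W G"
    unfolding W_def by (rule generate_is_subgroup) (simp add: carrier_UNIV)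
  have same_side: "x \<in> W \<longleftrightarrow> y \<in> W" if "dist x y < \<delta>" for x y
  proof -
    have "inv x \<otimes> y \<in> W"
      unfolding W_def using that dist_inv_mult_one[of x y]
      by (intro generate.incl) (simp add: dist_commute)
    moreover have "y = x \<otimes> (inv x \<otimes> y)" "x = y \<otimes> inv (inv x \<otimes> y)"
      by (simp_all add: m_assoc[symmetric] inv_mult_group)
    ultimately show ?thesis
      using W by (metis subgroup.m_closed subgroup.m_inv_closed)
  qed
  have "open W" "open (- W)"
    unfolding open_contains_ball using assms same_side
    by (metis Compl_iff mem_ball subsetI)+
  then have "W \<inter> G0 = {} \<or> - W \<inter> G0 = {}"
    unfolding G0_def by (intro connectedD[OF connected_connected_component]) auto
  moreover have "\<one> \<in> W"
    unfolding W_def by (rule generate.one)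
  ultimately show ?thesis
    unfolding W_def[symmetric] using one_in_G0 by blast
qed

abbreviation component :: "'g \<Rightarrow> 'g set" where
  "component x \<equiv> G0 #> x"

lemma subgroup_G0: "subgroup G0 G"
  using normal_G0 by (rule normal_imp_subgroup)

lemma mem_component_iff: "z \<in> component x \<longleftrightarrow> z \<otimes> inv x \<in> G0"
  using subgroup.rcos_module[OF subgroup_G0 is_group in_carrier in_carrier] .

lemma component_eq_iff: "component x = component y \<longleftrightarrow> x \<otimes> inv y \<in> G0"
proof
  assume "component x = component y"
  then show "x \<otimes> inv y \<in> G0"
    using rcos_self[OF in_carrier subgroup_G0, of x] mem_component_iff by simp
next
  assume "x \<otimes> inv y \<in> G0"
  then show "component x = component y"
    using repr_independence[OF _ in_carrier subgroup_G0] mem_component_iff by metis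
qed

lemma component_eq_if_dist_less:
  assumes "ball \<one> r \<subseteq> G0" "dist x y < r"
  shows "component x = component y"
proof -
  have "inv y \<otimes> x \<in> ball \<one> r"
    using assms(2) dist_inv_mult_one[of y x] by (simp add: dist_commute)
  then have "inv y \<otimes> x \<in> G0"
    using assms(1) by blast
  then have "y \<otimes> (inv y \<otimes> x) \<otimes> inv y \<in> G0"
    using normal_G0 by (simp add: normal.inv_op_closed2)
  then show ?thesis
    by (simp add: component_eq_iff m_assoc[symmetric])
qed

lemma open_component: "open (component x)"
proof -
  have "component x = (\<lambda>z. z \<otimes> inv x) -` G0"
    using mem_component_iff by blast
  moreover have "continuous_on UNIV (\<lambda>z. z \<otimes> inv x)"
    by (intro continuous_intros)
  ultimately show ?thesis
    using open_G0 by (simp add: open_vimage)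
qed

lemma finite_components_compact:
  assumes "compact K"
  shows "finite (component ` K)"
proof -
  have "K \<subseteq> (\<Union>c\<in>K. component c)"
    using rcos_self[OF in_carrier subgroup_G0] by blast
  then obtain C where C: "C \<subseteq> K" "finite C" "K \<subseteq> (\<Union>c\<in>C. component c)"
    by (rule compactE_image[OF assms open_component])
  have "component ` K \<subseteq> component ` C"
  proof
    fix y assume "y \<in> component ` K"
    then obtain x c where "y = component x" "c \<in> C" "x \<in> component c"
      using C(3) by blast
    then have "y = component c"
      using repr_independence[OF _ in_carrier subgroup_G0] by simp
    with \<open>c \<in> C\<close> show "y \<in> component ` C"
      by blast
  qed
  then show ?thesis
    using C(2) finite_subset by blast
qed

lemma component_representatives:
  assumes "open S" "S \<subseteq> K" "compact K"
  obtains P \<rho> where "P \<subseteq> S" "component ` P = component ` S"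
    "\<rho> > 0" "\<And>p. p \<in> P \<Longrightarrow> ball p \<rho> \<subseteq> S"
proof -
  define P where "P = inv_into S component ` component ` S"
  have "finite (component ` S)"
    by (rule finite_subset[OF image_mono[OF assms(2)] finite_components_compact[OF assms(3)]])
  then have P: "finite P"
    unfolding P_def by (rule finite_imageI)
  have PS: "P \<subseteq> S"
    unfolding P_def using inv_into_into[of _ component S] by blast
  have "component ` P = component ` S"
    unfolding P_def image_image by (rule image_cong[OF refl f_inv_into_f, THEN trans]) simp_all
  moreover obtain \<rho> where "\<rho> > 0" "\<And>p. p \<in> P \<Longrightarrow> ball p \<rho> \<subseteq> S"
    using compact_subset_open_imp_ball_epsilon_subset[OF finite_imp_compact[OF P] assms(1) PS]
    by (metis UN_subset_iff)
  ultimately show thesis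
    using that[OF PS] by blast
qed

lemma conjugation_small_on_compact:
  assumes "compact K" "\<eta> > 0"
  obtains \<theta> where "\<theta> > 0"
    "\<And>\<beta> w. \<beta> \<in> K \<Longrightarrow> dist w \<one> < \<theta> \<Longrightarrow> dist (inv \<beta> \<otimes> w \<otimes> \<beta>) \<one> < \<eta>"
proof -
  define U where "U = (\<lambda>p. inv (fst p) \<otimes> snd p \<otimes> fst p) -` ball \<one> \<eta>"
  have "open U"
    unfolding U_def by (intro open_vimage open_ball continuous_intros)
  moreover have "K \<times> {\<one>} \<subseteq> U"
    unfolding U_def using assms(2) by (auto simp: dist_commute)
  ultimately obtain \<theta> where \<theta>: "\<theta> > 0" "(\<Union>x\<in>K \<times> {\<one>}. ball x \<theta>) \<subseteq> U"
    using compact_subset_open_imp_ball_epsilon_subset[OF compact_Times[OF assms(1) compact_sing]]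
    by blast
  have "dist (inv \<beta> \<otimes> w \<otimes> \<beta>) \<one> < \<eta>" if "\<beta> \<in> K" "dist w \<one> < \<theta>" for \<beta> w
  proof -
    have "(\<beta>, w) \<in> ball (\<beta>, \<one>) \<theta>"
      using that(2) by (simp add: dist_Pair_Pair dist_commute)
    then have "(\<beta>, w) \<in> U"
      using \<theta>(2) that(1) by blast
    then show ?thesis
      unfolding U_def by (simp add: dist_commute)
  qed
  with \<theta>(1) show thesis
    using that by blast
qed

lemma group_component_group: "group (G Mod G0)"
  using normal_G0 by (rule normal.factorgroup_is_group)

lemma component_hom: "component \<in> hom G (G Mod G0)"
  using normal_G0 by (rule normal.r_coset_hom_Mod)

lemma group_hom_component: "group_hom G (G Mod G0) component"
  using component_hom group_component_group
  by (simp add: group_hom_def group_hom_axioms_def is_group)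

lemma carrier_component_group: "carrier (G Mod G0) = range component"
  by (simp add: carrier_FactGroup carrier_UNIV)

lemma component_mult: "component (x \<otimes> y) = component x \<otimes>\<^bsub>G Mod G0\<^esub> component y"
  using group_hom.hom_mult[OF group_hom_component] by simp

lemma component_inv: "component (inv x) = inv\<^bsub>G Mod G0\<^esub> component x"
  using group_hom.hom_inv[OF group_hom_component] by simp

lemma component_one: "component \<one> = \<one>\<^bsub>G Mod G0\<^esub>"
  using group_hom.hom_one[OF group_hom_component] by simp

lemma component_group_trivial:
  assumes "generate G {} = carrier G"
  shows "carrier (G Mod G0) = {\<one>\<^bsub>G Mod G0\<^esub>}"
proof -
  have "UNIV = {\<one>}"
    using assms by (simp add: generate_empty carrier_UNIV)
  then show ?thesis
    unfolding carrier_component_group component_one[symmetric] by (metis image_insert image_empty)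
qed

inductive chain_reachable :: "real \<Rightarrow> real \<Rightarrow> 'g \<Rightarrow> bool" for \<delta> R where
  start: "chain_reachable \<delta> R \<one>"
| step: "chain_reachable \<delta> R p \<Longrightarrow> dist p p' < \<delta> \<Longrightarrow> dist \<one> p' < R \<Longrightarrow> chain_reachable \<delta> R p'"

lemma chain_reachable_mono: "chain_reachable \<delta> R p \<Longrightarrow> R \<le> R' \<Longrightarrow> chain_reachable \<delta> R' p"
  by (induction rule: chain_reachable.induct) (auto intro: chain_reachable.intros)

lemma chain_reachable_dist_one: "chain_reachable \<delta> R p \<Longrightarrow> R > 0 \<Longrightarrow> dist \<one> p < R"
  by (induction rule: chain_reachable.induct) auto

lemma chain_reachable_mult:
  assumes "chain_reachable \<delta> R2 q" "chain_reachable \<delta> R1 c" "R1 > 0" "R2 > 0"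
  shows "chain_reachable \<delta> (R1 + R2) (c \<otimes> q)"
  using assms(1)
proof (induction rule: chain_reachable.induct)
  case start
  then show ?case
    using chain_reachable_mono[OF assms(2)] assms(4) by simp
next
  case (step p p')
  have "dist \<one> (c \<otimes> p') \<le> dist \<one> c + dist c (c \<otimes> p')"
    by (rule dist_triangle)
  also have "dist c (c \<otimes> p') = dist \<one> p'"
    using dist_mult_left[of c \<one> p'] by simp
  finally have "dist \<one> (c \<otimes> p') < R1 + R2"
    using chain_reachable_dist_one[OF assms(2,3)] step.hyps(3) by simp
  moreover have "dist (c \<otimes> p) (c \<otimes> p') < \<delta>"
    using step.hyps(2) by (simp add: dist_mult_left)
  ultimately show ?case
    using step.IH chain_reachable.step by blast
qed

lemma generate_ball_chain_reachable:
  assumes "\<delta> > 0" "c \<in> generate G (ball \<one> \<delta>)"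
  shows "\<exists>R>0. chain_reachable \<delta> R c"
  using assms(2)
proof (induction rule: generate.induct)
  case one
  show ?case
    using chain_reachable.start zero_less_one by blast
next
  case (incl h)
  then have "chain_reachable \<delta> \<delta> h"
    by (intro chain_reachable.step[OF chain_reachable.start]) (simp_all add: dist_commute)
  then show ?case
    using assms(1) by blast
next
  case (inv h)
  then have "chain_reachable \<delta> \<delta> (inv h)"
    using dist_inv_one[of h]
    by (intro chain_reachable.step[OF chain_reachable.start]) (simp_all add: dist_commute)
  then show ?case
    using assms(1) by blast
next
  case (eng h1 h2)
  then obtain R1 R2 where "R1 > 0" "chain_reachable \<delta> R1 h1" "R2 > 0" "chain_reachable \<delta> R2 h2"
    by blast
  then show ?case
    using chain_reachable_mult[of \<delta> R2 h2 R1 h1] by (intro exI[of _ "R1 + R2"]) simp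
qed

lemma chain_reachable_uniform:
  assumes "\<delta> > 0" "r > 0" "totally_bounded (ball \<one> r)" "ball \<one> r \<subseteq> G0"
  obtains R where "R > 0" "\<And>y. y \<in> ball \<one> r \<Longrightarrow> chain_reachable \<delta> R y"
proof -
  obtain C where C: "finite C" "C \<subseteq> ball \<one> r" "ball \<one> r \<subseteq> (\<Union>c\<in>C. ball c \<delta>)"
    using totally_bounded_finite_net[OF assms(3,1)] .
  have "\<forall>c\<in>C. \<exists>R>0. chain_reachable \<delta> R c"
  proof
    fix c assume "c \<in> C"
    then have "c \<in> generate G (ball \<one> \<delta>)"
      using C(2) assms(4) G0_subset_generate_ball[OF assms(1)] by blast
    then show "\<exists>R>0. chain_reachable \<delta> R c"
      by (rule generate_ball_chain_reachable[OF assms(1)])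
  qed
  then obtain Rc where Rc: "\<And>c. c \<in> C \<Longrightarrow> Rc c > 0 \<and> chain_reachable \<delta> (Rc c) c"
    by metis
  define R where "R = r + (\<Sum>c\<in>C. Rc c)"
  have Rc_sum_nonneg: "0 \<le> (\<Sum>c\<in>C. Rc c)"
    using Rc by (intro sum_nonneg) (simp add: less_imp_le)
  have "chain_reachable \<delta> R y" if y: "y \<in> ball \<one> r" for y
  proof -
    obtain c where c: "c \<in> C" "y \<in> ball c \<delta>"
      using C(3) y by blast
    have "Rc c \<le> (\<Sum>c\<in>C. Rc c)"
      using Rc C(1) c(1) by (intro member_le_sum) (simp_all add: less_imp_le)
    then have "Rc c \<le> R"
      unfolding R_def using assms(2) by simp
    then have "chain_reachable \<delta> R c"
      using Rc[OF c(1)] chain_reachable_mono by blast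
    moreover have "dist \<one> y < R"
      unfolding R_def using y Rc_sum_nonneg by simp
    ultimately show ?thesis
      using c(2) chain_reachable.step[of \<delta> R c y] by simp
  qed
  moreover have "R > 0"
    unfolding R_def using assms(2) Rc_sum_nonneg by simp
  ultimately show thesis
    using that by blast
qed

end


section \<open>Presentations and normal subgroups\<close>

lemma (in group) word_eval_Nil [simp]: "word_eval G [] = \<one>"
  by (simp add: word_eval_def)

lemma (in group) word_eval_Cons [simp]:
  "word_eval G ((s, b) # w) = (if b then s else inv s) \<otimes> word_eval G w"
  by (simp add: word_eval_def)

lemma (in group) word_eval_closed: "set w \<subseteq> carrier G \<times> UNIV \<Longrightarrow> word_eval G w \<in> carrier G"
  by (induction w) auto

lemma (in group) word_eval_append:
  assumes "set u \<subseteq> carrier G \<times> UNIV" "set v \<subseteq> carrier G \<times> UNIV"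
  shows "word_eval G (u @ v) = word_eval G u \<otimes> word_eval G v"
  using assms(1)
proof (induction u)
  case Nil
  then show ?case
    using word_eval_closed[OF assms(2)] by simp
next
  case (Cons a u)
  then show ?case
    using word_eval_closed[OF assms(2)] word_eval_closed[of u]
    by (cases a) (auto simp: m_assoc)
qed

lemma (in group) word_eval_generate:
  assumes "S \<subseteq> carrier G" "g \<in> generate G S"
  obtains w where "set w \<subseteq> S \<times> UNIV" "word_eval G w = g"
proof -
  have "\<exists>w. set w \<subseteq> S \<times> UNIV \<and> word_eval G w = g"
    using assms(2)
  proof (induction rule: generate.induct)
    case one
    show ?case
      by (intro exI[of _ "[]"]) simp
  next
    case (incl h)
    then show ?case
      using assms(1) by (intro exI[of _ "[(h, True)]"]) auto
  next
    case (inv h)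
    then show ?case
      using assms(1) by (intro exI[of _ "[(h, False)]"]) auto
  next
    case (eng h1 h2)
    then obtain w1 w2 where "set w1 \<subseteq> S \<times> UNIV" "word_eval G w1 = h1"
      "set w2 \<subseteq> S \<times> UNIV" "word_eval G w2 = h2"
      by blast
    moreover have "set w1 \<subseteq> carrier G \<times> UNIV" "set w2 \<subseteq> carrier G \<times> UNIV"
      using calculation(1,3) assms(1) by auto
    ultimately show ?case
      by (intro exI[of _ "w1 @ w2"]) (simp add: word_eval_append)
  qed
  then show thesis
    using that by blast
qed

lemma (in group) word_eval_map_congruent:
  assumes \<psi>: "\<And>s. \<psi> s \<in> carrier G"
    and relators: "\<And>r. r \<in> R \<Longrightarrow> word_eval G (map (apfst \<psi>) r) = \<one>"
    and "(w, v) \<in> word_congruence R"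
  shows "word_eval G (map (apfst \<psi>) w) = word_eval G (map (apfst \<psi>) v)"
proof -
  have closed: "set (map (apfst \<psi>) w) \<subseteq> carrier G \<times> UNIV" for w
    using \<psi> by auto
  have append: "word_eval G (map (apfst \<psi>) (x @ y)) =
      word_eval G (map (apfst \<psi>) x) \<otimes> word_eval G (map (apfst \<psi>) y)" for x y
    using word_eval_append[OF closed closed] by simp
  show ?thesis
    using assms(3)
  proof (induction rule: word_congruence.induct)
    case (wc_free u s b v)
    have "word_eval G (map (apfst \<psi>) [(s, b), (s, \<not> b)]) = \<one>"
      using \<psi>[of s] by (cases b) simp_all
    then show ?case
      using word_eval_closed[OF closed] by (simp only: append) simp
  next
    case (wc_rel r u v)
    then show ?case
      using relators word_eval_closed[OF closed] by (simp only: append) simp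
  qed simp_all
qed

lemma hom_if_word_eval_compatible:
  fixes M :: "('a, 'm) monoid_scheme" and Q :: "('c, 'n) monoid_scheme"
  assumes "group M" "group Q" "S \<subseteq> carrier M" "generate M S = carrier M"
    and \<psi>: "\<And>s. \<psi> s \<in> carrier Q"
    and compatible: "\<And>w. set w \<subseteq> S \<times> UNIV \<Longrightarrow> h (word_eval M w) = word_eval Q (map (apfst \<psi>) w)"
  shows "h \<in> hom M Q"
proof (rule homI)
  interpret M: group M by fact
  interpret Q: group Q by fact
  have Q_closed: "set (map (apfst \<psi>) w) \<subseteq> carrier Q \<times> UNIV" for w
    using \<psi> by auto
  fix g1 g2 assume "g1 \<in> carrier M" "g2 \<in> carrier M"
  then have "g1 \<in> generate M S" "g2 \<in> generate M S"
    using assms(4) by simp_all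
  obtain w1 where w1: "set w1 \<subseteq> S \<times> UNIV" "word_eval M w1 = g1"
    by (rule M.word_eval_generate[OF assms(3) \<open>g1 \<in> generate M S\<close>])
  obtain w2 where w2: "set w2 \<subseteq> S \<times> UNIV" "word_eval M w2 = g2"
    by (rule M.word_eval_generate[OF assms(3) \<open>g2 \<in> generate M S\<close>])
  have "g1 \<otimes>\<^bsub>M\<^esub> g2 = word_eval M (w1 @ w2)"
    using w1 w2 assms(3) by (subst M.word_eval_append) auto
  then have "h (g1 \<otimes>\<^bsub>M\<^esub> g2) = word_eval Q (map (apfst \<psi>) (w1 @ w2))"
    using w1(1) w2(1) compatible by simp
  also have "\<dots> = h g1 \<otimes>\<^bsub>Q\<^esub> h g2"
    using compatible[OF w1(1)] compatible[OF w2(1)] w1(2) w2(2)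
      Q.word_eval_append[OF Q_closed Q_closed] by simp
  finally show "h (g1 \<otimes>\<^bsub>M\<^esub> g2) = h g1 \<otimes>\<^bsub>Q\<^esub> h g2" .
next
  interpret M: group M by fact
  interpret Q: group Q by fact
  have Q_closed: "set (map (apfst \<psi>) w) \<subseteq> carrier Q \<times> UNIV" for w
    using \<psi> by auto
  fix g assume "g \<in> carrier M"
  then have "g \<in> generate M S"
    using assms(4) by simp
  then obtain w where "set w \<subseteq> S \<times> UNIV" "word_eval M w = g"
    by (rule M.word_eval_generate[OF assms(3)])
  then show "h g \<in> carrier Q"
    using compatible Q.word_eval_closed[OF Q_closed] by metis
qed

lemma hom_from_presentation:
  fixes M :: "('a, 'm) monoid_scheme" and Q :: "('c, 'n) monoid_scheme"
  assumes "group M" "group Q" "has_presentation M S R"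
    and \<psi>: "\<And>s. \<psi> s \<in> carrier Q"
    and relators: "\<And>r. r \<in> R \<Longrightarrow> word_eval Q (map (apfst \<psi>) r) = \<one>\<^bsub>Q\<^esub>"
  shows "\<exists>h\<in>hom M Q. \<forall>s\<in>S. h s = \<psi> s"
proof -
  interpret M: group M by fact
  interpret Q: group Q by fact
  have S: "S \<subseteq> carrier M" "generate M S = carrier M"
    and congruent: "\<And>w v. set w \<subseteq> S \<times> UNIV \<Longrightarrow> set v \<subseteq> S \<times> UNIV \<Longrightarrow>
        word_eval M w = word_eval M v \<Longrightarrow> (w, v) \<in> word_congruence R"
    using assms(3) unfolding has_presentation_def by blast+
  define word where "word g = (SOME w. set w \<subseteq> S \<times> UNIV \<and> word_eval M w = g)" for g
  have word: "set (word g) \<subseteq> S \<times> UNIV \<and> word_eval M (word g) = g" if "g \<in> carrier M" for g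
  proof -
    have "g \<in> generate M S"
      using that S(2) by simp
    then obtain w where "set w \<subseteq> S \<times> UNIV" "word_eval M w = g"
      by (rule M.word_eval_generate[OF S(1)])
    then have "\<exists>w. set w \<subseteq> S \<times> UNIV \<and> word_eval M w = g"
      by blast
    then show ?thesis
      unfolding word_def by (rule someI_ex)
  qed
  define h where "h g = word_eval Q (map (apfst \<psi>) (word g))" for g
  have compatible: "h (word_eval M w) = word_eval Q (map (apfst \<psi>) w)" if "set w \<subseteq> S \<times> UNIV" for w
  proof -
    have "word_eval M w \<in> carrier M"
      using that S(1) by (intro M.word_eval_closed) auto
    then show ?thesis
      unfolding h_def using word that
      by (intro Q.word_eval_map_congruent[OF \<psi> relators congruent]) simp_all
  qed
  have "h \<in> hom M Q"
    by (rule hom_if_word_eval_compatible[OF assms(1,2) S \<psi> compatible])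
  moreover have "h s = \<psi> s" if "s \<in> S" for s
    using compatible[of "[(s, True)]"] that S(1) \<psi>[of s] by auto
  ultimately show ?thesis
    by blast
qed

lemma (in group) conj_generate_closed:
  assumes s: "s \<in> carrier G" and A: "A \<subseteq> carrier G"
    and conj: "\<And>a. a \<in> A \<Longrightarrow> s \<otimes> a \<otimes> inv s \<in> generate G A"
    and "x \<in> generate G A"
  shows "s \<otimes> x \<otimes> inv s \<in> generate G A"
  using assms(4)
proof (induction rule: generate.induct)
  case one
  then show ?case
    using s generate.one by simp
next
  case (incl a)
  then show ?case
    by (rule conj)
next
  case (inv a)
  have "inv (s \<otimes> a \<otimes> inv s) \<in> generate G A"
    using subgroup.m_inv_closed[OF generate_is_subgroup[OF A] conj[OF inv]] .
  moreover have "a \<in> carrier G"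
    using inv A by blast
  ultimately show ?case
    using s by (simp add: inv_mult_group m_assoc)
next
  case (eng x y)
  have "x \<in> carrier G" "y \<in> carrier G"
    using eng.hyps generate_incl[OF A] by auto
  moreover have "inv s \<otimes> (s \<otimes> z) = z" if "z \<in> carrier G" for z
    using that s by (simp add: m_assoc[symmetric])
  ultimately have "s \<otimes> (x \<otimes> y) \<otimes> inv s = (s \<otimes> x \<otimes> inv s) \<otimes> (s \<otimes> y \<otimes> inv s)"
    using s by (simp add: m_assoc)
  then show ?case
    using generate.eng[OF eng.IH] by simp
qed

lemma (in group) normal_generate_if_conj_generators:
  assumes S: "S \<subseteq> carrier G" "generate G S = carrier G" "\<And>s. s \<in> S \<Longrightarrow> inv s \<in> S"
    and A: "A \<subseteq> carrier G"
    and conj: "\<And>s a. s \<in> S \<Longrightarrow> a \<in> A \<Longrightarrow> s \<otimes> a \<otimes> inv s \<in> generate G A"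
  shows "generate G A \<lhd> G"
proof -
  have N: "subgroup (generate G A) G"
    using A by (rule generate_is_subgroup)
  have "g \<otimes> x \<otimes> inv g \<in> generate G A" if "g \<in> generate G S" "x \<in> generate G A" for g x
    using that
  proof (induction arbitrary: x rule: generate.induct)
    case one
    then show ?case
      using N by (simp add: subgroup.mem_carrier)
  next
    case (incl s)
    then show ?case
      using conj_generate_closed[OF subsetD[OF S(1)] A conj] by blast
  next
    case (inv s)
    then have "inv s \<in> S"
      using S(3) by blast
    then show ?case
      using conj_generate_closed[OF subsetD[OF S(1)] A conj] inv.prems by blast
  next
    case (eng g h)
    have "g \<in> carrier G" "h \<in> carrier G"
      using eng.hyps generate_incl[OF S(1)] by blast+
    moreover have "x \<in> carrier G"
      using eng.prems N by (simp add: subgroup.mem_carrier)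
    ultimately have "g \<otimes> h \<otimes> x \<otimes> inv (g \<otimes> h) = g \<otimes> (h \<otimes> x \<otimes> inv h) \<otimes> inv g"
      by (simp add: m_assoc inv_mult_group)
    then show ?case
      using eng.IH eng.prems by simp
  qed
  then show ?thesis
    using N S(2) by (intro normal_invI) auto
qed

lemma (in group_hom) FactGroup_hom_image:
  assumes "N \<lhd> G" "N \<subseteq> kernel G H h"
  shows "\<exists>g\<in>hom (G Mod N) H. g ` carrier (G Mod N) = h ` carrier G"
proof -
  obtain g where g: "g \<in> hom (G Mod N) H" "\<And>x. x \<in> carrier G \<Longrightarrow> g (N #> x) = h x"
    using FactGroup_universal_kernel[OF assms] by blast
  have "g ` carrier (G Mod N) = h ` carrier G"
    unfolding carrier_FactGroup RCOSETS_def using g(2) by (auto simp: image_iff)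
  with g(1) show ?thesis
    by blast
qed


section \<open>Approximations at a fixed scale\<close>

text \<open>
  The conditions of a discrete approximation at one index, for radius \<open>R\<close> and precision \<open>\<epsilon>\<close>.
\<close>

locale approximation_at_scale = metric_group G + M: group M
  for G :: "('g::metric_space, 'b) monoid_scheme" (structure) and M :: "('a, 'c) monoid_scheme" +
  fixes f :: "'a \<Rightarrow> 'g" and R \<epsilon> :: real
  assumes eps_pos: "\<epsilon> > 0"
    and dist_one_f_one: "dist \<one> (f \<one>\<^bsub>M\<^esub>) < R"
    and almost_hom: "\<And>g1 g2. g1 \<in> carrier M \<Longrightarrow> g2 \<in> carrier M \<Longrightarrow>
        dist \<one> (f g1) < R \<Longrightarrow> dist \<one> (f g2) < R \<Longrightarrow>
        dist (f (g1 \<otimes>\<^bsub>M\<^esub> inv\<^bsub>M\<^esub> g2)) (f g1 \<otimes> f (inv\<^bsub>M\<^esub> g2)) \<le> \<epsilon>"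
    and almost_onto: "\<And>x. dist \<one> x < R \<Longrightarrow> \<exists>g\<in>carrier M. dist x (f g) < \<epsilon>"
begin

abbreviation ball_preimage :: "real \<Rightarrow> 'a set" where
  "ball_preimage \<theta> \<equiv> f -` ball \<one> \<theta> \<inter> carrier M"

lemma dist_f_one: "dist (f \<one>\<^bsub>M\<^esub>) \<one> \<le> \<epsilon>"
proof -
  have "dist (f \<one>\<^bsub>M\<^esub>) (f \<one>\<^bsub>M\<^esub> \<otimes> f \<one>\<^bsub>M\<^esub>) \<le> \<epsilon>"
    using almost_hom[of "\<one>\<^bsub>M\<^esub>" "\<one>\<^bsub>M\<^esub>"] dist_one_f_one by simp
  moreover have "dist (f \<one>\<^bsub>M\<^esub> \<otimes> \<one>) (f \<one>\<^bsub>M\<^esub> \<otimes> f \<one>\<^bsub>M\<^esub>) = dist \<one> (f \<one>\<^bsub>M\<^esub>)"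
    by (rule dist_mult_left)
  ultimately show ?thesis
    by (simp add: dist_commute)
qed

lemma dist_f_mult_f_inv:
  assumes "g \<in> carrier M" "dist \<one> (f g) < R"
  shows "dist (f g \<otimes> f (inv\<^bsub>M\<^esub> g)) \<one> \<le> 2 * \<epsilon>"
proof -
  have "dist (f \<one>\<^bsub>M\<^esub>) (f g \<otimes> f (inv\<^bsub>M\<^esub> g)) \<le> \<epsilon>"
    using almost_hom[OF assms(1) assms(1) assms(2) assms(2)] assms(1) by simp
  moreover have "dist (f g \<otimes> f (inv\<^bsub>M\<^esub> g)) \<one>
      \<le> dist (f g \<otimes> f (inv\<^bsub>M\<^esub> g)) (f \<one>\<^bsub>M\<^esub>) + dist (f \<one>\<^bsub>M\<^esub>) \<one>"
    by (rule dist_triangle)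
  ultimately show ?thesis
    using dist_f_one by (simp add: dist_commute)
qed

lemma dist_f_inv:
  assumes "g \<in> carrier M" "dist \<one> (f g) < R"
  shows "dist (f (inv\<^bsub>M\<^esub> g)) (inv (f g)) \<le> 2 * \<epsilon>"
proof -
  have "dist (inv (f g) \<otimes> (f g \<otimes> f (inv\<^bsub>M\<^esub> g))) (inv (f g) \<otimes> \<one>) = dist (f g \<otimes> f (inv\<^bsub>M\<^esub> g)) \<one>"
    by (rule dist_mult_left)
  moreover have "inv (f g) \<otimes> (f g \<otimes> f (inv\<^bsub>M\<^esub> g)) = f (inv\<^bsub>M\<^esub> g)"
    by (simp add: m_assoc[symmetric])
  ultimately show ?thesis
    using dist_f_mult_f_inv[OF assms] by simp
qed

lemma dist_one_f_inv:
  assumes "g \<in> carrier M" "dist \<one> (f g) < R"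
  shows "dist \<one> (f (inv\<^bsub>M\<^esub> g)) \<le> dist \<one> (f g) + 2 * \<epsilon>"
proof -
  have "dist \<one> (f (inv\<^bsub>M\<^esub> g)) \<le> dist \<one> (inv (f g)) + dist (inv (f g)) (f (inv\<^bsub>M\<^esub> g))"
    by (rule dist_triangle)
  moreover have "dist \<one> (inv (f g)) = dist \<one> (f g)"
    using dist_inv_one[of "f g"] by (simp add: dist_commute)
  ultimately show ?thesis
    using dist_f_inv[OF assms] by (simp add: dist_commute)
qed

lemma dist_f_mult:
  assumes "a \<in> carrier M" "b \<in> carrier M" "dist \<one> (f a) < R" "dist \<one> (f (inv\<^bsub>M\<^esub> b)) < R"
  shows "dist (f (a \<otimes>\<^bsub>M\<^esub> b)) (f a \<otimes> f b) \<le> \<epsilon>"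
  using almost_hom[OF assms(1) M.inv_closed[OF assms(2)] assms(3,4)] assms(2) by simp

text \<open>The step of a chain is lifted by an element \<open>q\<close> whose image approximates \<open>inv (f a) \<otimes> p'\<close>.\<close>

lemma chain_step:
  assumes a: "a \<in> carrier M" "dist (f a) p \<le> 2 * \<epsilon>" "dist \<one> p < R1"
    and step: "dist p p' < \<delta>"
    and "R1 + 2 * \<epsilon> < R" "\<delta> + 5 * \<epsilon> < R" "\<delta> + 3 * \<epsilon> \<le> \<theta>"
  obtains q where "q \<in> ball_preimage \<theta>" "dist (f (a \<otimes>\<^bsub>M\<^esub> q)) p' \<le> 2 * \<epsilon>"
proof -
  define t where "t = inv (f a) \<otimes> p'"
  have "dist t \<one> \<le> dist p' p + dist p (f a)"
    unfolding t_def dist_inv_mult_one by (rule dist_triangle)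
  then have t: "dist \<one> t < \<delta> + 2 * \<epsilon>"
    using a(2) step by (simp add: dist_commute)
  then obtain q where q: "q \<in> carrier M" "dist t (f q) < \<epsilon>"
    using almost_onto[of t] assms(6) eps_pos by auto
  have "dist \<one> (f q) \<le> dist \<one> t + dist t (f q)"
    by (rule dist_triangle)
  then have fq: "dist \<one> (f q) < \<delta> + 3 * \<epsilon>"
    using t q(2) by linarith
  have "dist \<one> (f a) \<le> dist \<one> p + dist p (f a)"
    by (rule dist_triangle)
  then have fa: "dist \<one> (f a) < R"
    using a assms(5) by (simp add: dist_commute)
  have "dist \<one> (f q) < R"
    using fq assms(6) eps_pos by linarith
  then have "dist \<one> (f (inv\<^bsub>M\<^esub> q)) < R"
    using dist_one_f_inv[OF q(1)] fq assms(6) by fastforce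
  then have "dist (f (a \<otimes>\<^bsub>M\<^esub> q)) (f a \<otimes> f q) \<le> \<epsilon>"
    by (rule dist_f_mult[OF a(1) q(1) fa])
  moreover have "dist (f a \<otimes> f q) p' < \<epsilon>"
    using q(2) dist_mult_left[of "f a" "f q" t] by (simp add: t_def m_assoc[symmetric] dist_commute)
  moreover have "dist (f (a \<otimes>\<^bsub>M\<^esub> q)) p' \<le> dist (f (a \<otimes>\<^bsub>M\<^esub> q)) (f a \<otimes> f q) + dist (f a \<otimes> f q) p'"
    by (rule dist_triangle)
  moreover have "q \<in> ball_preimage \<theta>"
    using q(1) fq assms(7) by simp
  ultimately show thesis
    using that by simp
qed

lemma chain_reachable_lift:
  assumes "chain_reachable \<delta> R1 p" "R1 > 0"
    and "R1 + 2 * \<epsilon> < R" "\<delta> + 5 * \<epsilon> < R" "\<delta> + 3 * \<epsilon> \<le> \<theta>"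
  shows "\<exists>a\<in>generate M (ball_preimage \<theta>). dist (f a) p \<le> 2 * \<epsilon>"
  using assms(1)
proof (induction rule: chain_reachable.induct)
  case start
  show ?case
    using dist_f_one eps_pos by (intro bexI[of _ "\<one>\<^bsub>M\<^esub>"] generate.one) auto
next
  case (step p p')
  then obtain a where a: "a \<in> generate M (ball_preimage \<theta>)" "dist (f a) p \<le> 2 * \<epsilon>"
    by blast
  have "a \<in> carrier M"
    using a(1) M.generate_incl[of "ball_preimage \<theta>"] by blast
  then obtain q where "q \<in> ball_preimage \<theta>" "dist (f (a \<otimes>\<^bsub>M\<^esub> q)) p' \<le> 2 * \<epsilon>"
    by (rule chain_step[OF _ a(2) chain_reachable_dist_one[OF step.hyps(1) assms(2)] step.hyps(2) assms(3-5)])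
  then show ?case
    using generate.eng[OF a(1) generate.incl] by blast
qed

lemma inv_mult_mem_ball_preimage:
  assumes x: "x \<in> carrier M" "dist \<one> (f x) < r"
    and a: "a \<in> carrier M" "dist (f a) (f x) \<le> 2 * \<epsilon>"
    and bounds: "r + 4 * \<epsilon> < R" "5 * \<epsilon> < \<theta>"
  shows "inv\<^bsub>M\<^esub> x \<otimes>\<^bsub>M\<^esub> a \<in> ball_preimage \<theta>"
proof -
  have f_inv_x: "dist \<one> (f (inv\<^bsub>M\<^esub> x)) < R"
    using dist_one_f_inv[OF x(1)] x(2) bounds(1) eps_pos by fastforce
  have "dist \<one> (f a) \<le> dist \<one> (f x) + dist (f x) (f a)"
    by (rule dist_triangle)
  then have "dist \<one> (f a) < r + 2 * \<epsilon>"
    using a(2) x(2) by (simp add: dist_commute)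
  then have "dist \<one> (f (inv\<^bsub>M\<^esub> a)) < R"
    using dist_one_f_inv[OF a(1)] bounds(1) eps_pos by fastforce
  then have "dist (f (inv\<^bsub>M\<^esub> x \<otimes>\<^bsub>M\<^esub> a)) (f (inv\<^bsub>M\<^esub> x) \<otimes> f a) \<le> \<epsilon>"
    by (rule dist_f_mult[OF M.inv_closed[OF x(1)] a(1) f_inv_x])
  moreover have "dist (f (inv\<^bsub>M\<^esub> x) \<otimes> f a) (f (inv\<^bsub>M\<^esub> x) \<otimes> f x) \<le> 2 * \<epsilon>"
    using a(2) by (simp add: dist_mult_left)
  moreover have "dist (f (inv\<^bsub>M\<^esub> x) \<otimes> f x) \<one> \<le> 2 * \<epsilon>"
    using dist_f_mult_f_inv[OF M.inv_closed[OF x(1)] f_inv_x] x(1) by simp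
  ultimately have "dist (f (inv\<^bsub>M\<^esub> x \<otimes>\<^bsub>M\<^esub> a)) \<one> \<le> 5 * \<epsilon>"
    using dist_triangle[of "f (inv\<^bsub>M\<^esub> x \<otimes>\<^bsub>M\<^esub> a)" \<one> "f (inv\<^bsub>M\<^esub> x) \<otimes> f a"]
      dist_triangle[of "f (inv\<^bsub>M\<^esub> x) \<otimes> f a" \<one> "f (inv\<^bsub>M\<^esub> x) \<otimes> f x"]
    by linarith
  then show ?thesis
    using x(1) a(1) bounds(2) by (simp add: dist_commute)
qed

lemma ball_preimage_subset_generate:
  assumes reach: "\<And>y. y \<in> ball \<one> r \<Longrightarrow> chain_reachable \<delta> R1 y" "R1 > 0"
    and "R1 + 2 * \<epsilon> < R" "\<delta> + 5 * \<epsilon> < R" "\<delta> + 3 * \<epsilon> \<le> \<theta>" "r + 4 * \<epsilon> < R" "5 * \<epsilon> < \<theta>"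
  shows "ball_preimage r \<subseteq> generate M (ball_preimage \<theta>)"
proof
  fix x assume "x \<in> ball_preimage r"
  then have x: "x \<in> carrier M" "dist \<one> (f x) < r"
    by simp_all
  obtain a where a: "a \<in> generate M (ball_preimage \<theta>)" "dist (f a) (f x) \<le> 2 * \<epsilon>"
    using chain_reachable_lift[OF reach(1) reach(2) assms(3-5)] x(2) by auto
  have a_carrier: "a \<in> carrier M"
    using a(1) M.generate_incl[of "ball_preimage \<theta>"] by blast
  define z where "z = inv\<^bsub>M\<^esub> x \<otimes>\<^bsub>M\<^esub> a"
  have "z \<in> generate M (ball_preimage \<theta>)"
    unfolding z_def using inv_mult_mem_ball_preimage[OF x a_carrier a(2) assms(6,7)] by (rule generate.incl)
  then have "a \<otimes>\<^bsub>M\<^esub> inv\<^bsub>M\<^esub> z \<in> generate M (ball_preimage \<theta>)"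
    using a(1) M.generate_is_subgroup[of "ball_preimage \<theta>"]
    by (simp add: subgroup.m_closed subgroup.m_inv_closed)
  moreover have "a \<otimes>\<^bsub>M\<^esub> inv\<^bsub>M\<^esub> z = x"
    unfolding z_def using x(1) a_carrier by (simp add: M.inv_mult_group M.m_assoc[symmetric])
  ultimately show "x \<in> generate M (ball_preimage \<theta>)"
    by simp
qed

lemma dist_f_mult_ball_preimage:
  assumes a: "a \<in> carrier M" "dist \<one> (f a) < R"
    and q: "q \<in> ball_preimage \<theta>" and bound: "\<theta> + 2 * \<epsilon> < R"
  shows "dist (f (a \<otimes>\<^bsub>M\<^esub> q)) (f a) < \<epsilon> + \<theta>"
proof -
  have q_carrier: "q \<in> carrier M" and fq: "dist \<one> (f q) < \<theta>"
    using q by simp_all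
  have "dist \<one> (f (inv\<^bsub>M\<^esub> q)) < R"
    using dist_one_f_inv[OF q_carrier] fq bound eps_pos by fastforce
  then have "dist (f (a \<otimes>\<^bsub>M\<^esub> q)) (f a \<otimes> f q) \<le> \<epsilon>"
    by (rule dist_f_mult[OF a(1) q_carrier a(2)])
  moreover have "dist (f a \<otimes> f q) (f a) < \<theta>"
    using fq dist_mult_right_one[of "f a" "f q"] by (simp add: dist_commute)
  ultimately show ?thesis
    using dist_triangle[of "f (a \<otimes>\<^bsub>M\<^esub> q)" "f a" "f a \<otimes> f q"] by linarith
qed

text \<open>
  With \<open>\<alpha> = f (s q) \<approx> f s\<close> and \<open>\<beta> = f (inv s) \<in> K\<close>, the image of \<open>s q (inv s)\<close> is close
  to \<open>\<alpha> \<beta>\<close>, which differs from \<open>f s \<beta> \<approx> \<one>\<close> by the conjugate under \<open>\<beta>\<close> of the small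
  element \<open>inv (f s) \<alpha>\<close>.
\<close>

lemma conj_mem_ball_preimage:
  assumes s: "s \<in> carrier M" "f s \<in> K" "f (inv\<^bsub>M\<^esub> s) \<in> K"
    and q: "q \<in> ball_preimage \<theta>"
    and K: "\<And>\<beta>. \<beta> \<in> K \<Longrightarrow> dist \<one> \<beta> < RK"
    and conj: "\<And>\<beta> w. \<beta> \<in> K \<Longrightarrow> dist w \<one> < \<theta>' \<Longrightarrow> dist (inv \<beta> \<otimes> w \<otimes> \<beta>) \<one> < r / 4"
    and bounds: "\<epsilon> + \<theta> < \<theta>'" "RK + \<theta> + \<epsilon> < R" "\<theta> + 2 * \<epsilon> < R" "\<epsilon> < r / 4"
  shows "s \<otimes>\<^bsub>M\<^esub> q \<otimes>\<^bsub>M\<^esub> inv\<^bsub>M\<^esub> s \<in> ball_preimage r"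
proof -
  have q_carrier: "q \<in> carrier M" and fq: "dist \<one> (f q) < \<theta>"
    using q by simp_all
  have fs: "dist \<one> (f s) < RK"
    using K s(2) by blast
  then have fs_R: "dist \<one> (f s) < R"
    using fq bounds(2) eps_pos zero_le_dist[of \<one> "f q"] by linarith
  define \<alpha> where "\<alpha> = f (s \<otimes>\<^bsub>M\<^esub> q)"
  define \<beta> where "\<beta> = f (inv\<^bsub>M\<^esub> s)"
  have \<alpha>: "dist \<alpha> (f s) < \<epsilon> + \<theta>"
    unfolding \<alpha>_def by (rule dist_f_mult_ball_preimage[OF s(1) fs_R q bounds(3)])
  then have "dist \<one> (f (s \<otimes>\<^bsub>M\<^esub> q)) < R"
    unfolding \<alpha>_def[symmetric] using fs bounds(2) dist_triangle[of \<one> \<alpha> "f s"]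
    by (simp add: dist_commute)
  then have "dist (f (s \<otimes>\<^bsub>M\<^esub> q \<otimes>\<^bsub>M\<^esub> inv\<^bsub>M\<^esub> s)) (\<alpha> \<otimes> \<beta>) \<le> \<epsilon>"
    unfolding \<alpha>_def \<beta>_def using fs_R s(1) q_carrier by (intro dist_f_mult) simp_all
  moreover have "dist (\<alpha> \<otimes> \<beta>) (f s \<otimes> \<beta>) < r / 4"
    unfolding dist_mult_right \<beta>_def
    using \<alpha> bounds(1) dist_inv_mult_one[of "f s" \<alpha>] by (intro conj[OF s(3)]) linarith
  moreover have "dist (f s \<otimes> \<beta>) \<one> \<le> 2 * \<epsilon>"
    unfolding \<beta>_def by (rule dist_f_mult_f_inv[OF s(1) fs_R])
  ultimately have "dist (f (s \<otimes>\<^bsub>M\<^esub> q \<otimes>\<^bsub>M\<^esub> inv\<^bsub>M\<^esub> s)) \<one> < r"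
    using dist_triangle[of "f (s \<otimes>\<^bsub>M\<^esub> q \<otimes>\<^bsub>M\<^esub> inv\<^bsub>M\<^esub> s)" \<one> "\<alpha> \<otimes> \<beta>"]
      dist_triangle[of "\<alpha> \<otimes> \<beta>" \<one> "f s \<otimes> \<beta>"] bounds(4)
    by linarith
  then show ?thesis
    using s(1) q_carrier by (simp add: dist_commute)
qed

lemma generate_ball_preimage_eq:
  assumes "ball_preimage r \<subseteq> generate M (ball_preimage \<theta>)" "\<theta> \<le> r"
  shows "generate M (ball_preimage r) = generate M (ball_preimage \<theta>)"
proof
  show "generate M (ball_preimage r) \<subseteq> generate M (ball_preimage \<theta>)"
    using assms(1) M.generate_is_subgroup[of "ball_preimage \<theta>"]
    by (intro M.generate_subgroup_incl) auto
  show "generate M (ball_preimage \<theta>) \<subseteq> generate M (ball_preimage r)"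
    using assms(2) by (intro M.mono_generate) auto
qed

lemma generate_ball_preimage_normal:
  assumes S: "S \<subseteq> carrier M" "generate M S = carrier M" "\<And>s. s \<in> S \<Longrightarrow> inv\<^bsub>M\<^esub> s \<in> S"
      "f ` S \<subseteq> K"
    and K: "\<And>\<beta>. \<beta> \<in> K \<Longrightarrow> dist \<one> \<beta> < RK"
    and conj: "\<And>\<beta> w. \<beta> \<in> K \<Longrightarrow> dist w \<one> < \<theta>' \<Longrightarrow> dist (inv \<beta> \<otimes> w \<otimes> \<beta>) \<one> < r / 4"
    and small_generates: "ball_preimage r \<subseteq> generate M (ball_preimage \<theta>)"
    and bounds: "\<theta> \<le> r" "\<epsilon> + \<theta> < \<theta>'" "RK + \<theta> + \<epsilon> < R" "\<theta> + 2 * \<epsilon> < R" "\<epsilon> < r / 4"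
  shows "generate M (ball_preimage r) \<lhd> M"
proof -
  have "s \<otimes>\<^bsub>M\<^esub> q \<otimes>\<^bsub>M\<^esub> inv\<^bsub>M\<^esub> s \<in> generate M (ball_preimage \<theta>)"
    if "s \<in> S" "q \<in> ball_preimage \<theta>" for s q
  proof -
    have "s \<in> carrier M" "f s \<in> K" "f (inv\<^bsub>M\<^esub> s) \<in> K"
      using that(1) S(1,3,4) by auto
    then have "s \<otimes>\<^bsub>M\<^esub> q \<otimes>\<^bsub>M\<^esub> inv\<^bsub>M\<^esub> s \<in> ball_preimage r"
      by (rule conj_mem_ball_preimage[OF _ _ _ that(2) K conj bounds(2-5)])
    then show ?thesis
      using small_generates by (rule subsetD[rotated])
  qed
  then have "generate M (ball_preimage \<theta>) \<lhd> M"
    using S(1-3) by (intro M.normal_generate_if_conj_generators) auto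
  then show ?thesis
    unfolding generate_ball_preimage_eq[OF small_generates bounds(1)] .
qed

lemma group_hom_component_group: "h \<in> hom M (G Mod G0) \<Longrightarrow> group_hom M (G Mod G0) h"
  using group_component_group by (simp add: group_hom_def group_hom_axioms_def M.is_group)

lemma component_f_inv:
  assumes "ball \<one> r \<subseteq> G0" "2 * \<epsilon> < r" "g \<in> carrier M" "dist \<one> (f g) < R"
  shows "component (f (inv\<^bsub>M\<^esub> g)) = inv\<^bsub>G Mod G0\<^esub> component (f g)"
proof -
  have "component (f (inv\<^bsub>M\<^esub> g)) = component (inv (f g))"
    using dist_f_inv[OF assms(3,4)] assms(2) by (intro component_eq_if_dist_less[OF assms(1)]) simp
  then show ?thesis
    by (simp add: component_inv)
qed

lemma component_f_relator:
  assumes r: "ball \<one> r \<subseteq> G0" "2 * \<epsilon> < r"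
    and x: "x1 \<in> carrier M" "x2 \<in> carrier M" "x3 \<in> carrier M"
      "dist \<one> (f x1) < R" "dist \<one> (f (inv\<^bsub>M\<^esub> x2)) < R" "dist \<one> (f x3) < R"
    and relator: "x1 \<otimes>\<^bsub>M\<^esub> x2 \<otimes>\<^bsub>M\<^esub> x3 = \<one>\<^bsub>M\<^esub>"
  shows "component (f x1) \<otimes>\<^bsub>G Mod G0\<^esub> (component (f x2) \<otimes>\<^bsub>G Mod G0\<^esub> component (f x3))
    = \<one>\<^bsub>G Mod G0\<^esub>"
proof -
  interpret Q: group "G Mod G0"
    by (rule group_component_group)
  have "inv\<^bsub>M\<^esub> x3 = x1 \<otimes>\<^bsub>M\<^esub> x2"
    using relator x(1-3) by (intro M.inv_equality) (simp_all add: M.m_assoc)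
  have "component (f x1) \<otimes>\<^bsub>G Mod G0\<^esub> component (f x2) = component (f x1 \<otimes> f x2)"
    by (rule component_mult[symmetric])
  also have "\<dots> = component (f (x1 \<otimes>\<^bsub>M\<^esub> x2))"
    using dist_f_mult[OF x(1,2,4,5)] r eps_pos
    by (intro component_eq_if_dist_less[OF r(1)]) (simp add: dist_commute)
  also have "\<dots> = component (inv (f x3))"
    using dist_f_inv[OF x(3,6)] \<open>inv\<^bsub>M\<^esub> x3 = x1 \<otimes>\<^bsub>M\<^esub> x2\<close> r
    by (intro component_eq_if_dist_less[OF r(1)]) simp
  finally have x12: "component (f x1) \<otimes>\<^bsub>G Mod G0\<^esub> component (f x2) = component (inv (f x3))" .
  have carrier: "component x \<in> carrier (G Mod G0)" for x
    by (simp add: carrier_component_group)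
  have "component (f x1) \<otimes>\<^bsub>G Mod G0\<^esub> (component (f x2) \<otimes>\<^bsub>G Mod G0\<^esub> component (f x3))
      = component (inv (f x3)) \<otimes>\<^bsub>G Mod G0\<^esub> component (f x3)"
    unfolding x12[symmetric] by (rule Q.m_assoc[symmetric]) (rule carrier)+
  also have "\<dots> = \<one>\<^bsub>G Mod G0\<^esub>"
    unfolding component_mult[symmetric] component_one[symmetric] by simp
  finally show ?thesis .
qed

lemma hom_to_component_group:
  assumes r: "ball \<one> r \<subseteq> G0" "2 * \<epsilon> < r"
    and S: "S \<subseteq> carrier M" "\<And>s. s \<in> S \<Longrightarrow> inv\<^bsub>M\<^esub> s \<in> S" "\<And>s. s \<in> S \<Longrightarrow> dist \<one> (f s) < R"
    and presentation: "has_presentation M S Rel" "\<And>w. w \<in> Rel \<Longrightarrow> length w = 3"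
  shows "\<exists>h\<in>hom M (G Mod G0). \<forall>s\<in>S. h s = component (f s)"
proof -
  interpret Q: group "G Mod G0"
    by (rule group_component_group)
  define \<psi> where "\<psi> s = component (f s)" for s
  define letter where "letter b s = (if b then s else inv\<^bsub>M\<^esub> s)" for b s
  have \<psi>: "\<psi> s \<in> carrier (G Mod G0)" for s
    unfolding \<psi>_def carrier_component_group by simp
  have letter: "letter b s \<in> S" if "s \<in> S" for b s
    using that S(2) unfolding letter_def by simp
  have image_letter: "(if b then \<psi> s else inv\<^bsub>G Mod G0\<^esub> \<psi> s) = \<psi> (letter b s)"
    if "s \<in> S" for s b
    using component_f_inv[OF r] that S(1,3) unfolding \<psi>_def letter_def by auto
  have "word_eval (G Mod G0) (map (apfst \<psi>) w) = \<one>\<^bsub>G Mod G0\<^esub>" if w_Rel: "w \<in> Rel" for w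
  proof -
    have w: "set w \<subseteq> S \<times> UNIV" "word_eval M w = \<one>\<^bsub>M\<^esub>"
      using presentation(1) w_Rel unfolding has_presentation_def by blast+
    obtain s1 b1 s2 b2 s3 b3 where w3: "w = [(s1, b1), (s2, b2), (s3, b3)]"
      using presentation(2)[OF w_Rel] by (auto simp: length_Suc_conv numeral_3_eq_3)
    then have s: "s1 \<in> S" "s2 \<in> S" "s3 \<in> S"
      using w(1) by auto
    then have "letter b1 s1 \<otimes>\<^bsub>M\<^esub> letter b2 s2 \<otimes>\<^bsub>M\<^esub> letter b3 s3 = \<one>\<^bsub>M\<^esub>"
      using w(2) letter S(1) unfolding w3 by (simp add: letter_def M.m_assoc subset_iff)
    then have "\<psi> (letter b1 s1) \<otimes>\<^bsub>G Mod G0\<^esub> (\<psi> (letter b2 s2) \<otimes>\<^bsub>G Mod G0\<^esub> \<psi> (letter b3 s3))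
        = \<one>\<^bsub>G Mod G0\<^esub>"
      unfolding \<psi>_def using letter[OF s(1)] letter[OF s(2)] letter[OF s(3)] S
      by (intro component_f_relator[OF r]) auto
    then show ?thesis
      unfolding w3 using s
      by (simp only: list.map apfst_conv Q.word_eval_Cons Q.word_eval_Nil image_letter Q.r_one[OF \<psi>])
  qed
  then have "\<exists>h\<in>hom M (G Mod G0). \<forall>s\<in>S. h s = \<psi> s"
    by (rule hom_from_presentation[OF M.is_group group_component_group presentation(1) \<psi>])
  then show ?thesis
    unfolding \<psi>_def .
qed

text \<open>
  Choose \<open>a \<in> S\<close> with \<open>f a\<close> deep inside \<open>S0\<close>; then also \<open>a q \<in> S\<close>, and \<open>f (a q)\<close> lies in the
  component of \<open>f a\<close>, so \<open>h a h q = h a\<close>.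
\<close>

lemma ball_preimage_subset_kernel:
  assumes r: "ball \<one> r \<subseteq> G0"
    and h: "h \<in> hom M (G Mod G0)" "\<forall>s\<in>S. h s = component (f s)"
    and S: "f -` S0 \<inter> carrier M \<subseteq> S" "\<And>s. s \<in> S \<Longrightarrow> dist \<one> (f s) < R"
    and p: "ball p \<rho> \<subseteq> S0" "dist \<one> p < R"
    and bounds: "2 * \<epsilon> + \<theta> < \<rho>" "\<theta> + \<epsilon> < r" "\<theta> + 2 * \<epsilon> < R"
  shows "ball_preimage \<theta> \<subseteq> kernel M (G Mod G0) h"
proof
  fix q assume "q \<in> ball_preimage \<theta>"
  then have q: "q \<in> carrier M" "dist \<one> (f q) < \<theta>"
    by simp_all
  interpret h: group_hom M "G Mod G0" h
    using h(1) by (rule group_hom_component_group)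
  obtain a where a: "a \<in> carrier M" "dist p (f a) < \<epsilon>"
    using almost_onto[OF p(2)] by blast
  then have "dist p (f a) < \<rho>"
    using bounds(1) eps_pos q(2) zero_le_dist[of \<one> "f q"] by linarith
  then have "f a \<in> ball p \<rho>"
    by simp
  then have a_S: "a \<in> S"
    using p(1) S(1) a(1) by blast
  have aq: "dist (f (a \<otimes>\<^bsub>M\<^esub> q)) (f a) < \<epsilon> + \<theta>"
    using dist_f_mult_ball_preimage[OF a(1) S(2)[OF a_S] \<open>q \<in> ball_preimage \<theta>\<close> bounds(3)] .
  have "dist p (f (a \<otimes>\<^bsub>M\<^esub> q)) \<le> dist p (f a) + dist (f a) (f (a \<otimes>\<^bsub>M\<^esub> q))"
    by (rule dist_triangle)
  then have "f (a \<otimes>\<^bsub>M\<^esub> q) \<in> ball p \<rho>"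
    using a(2) aq bounds(1) by (simp add: dist_commute)
  then have "a \<otimes>\<^bsub>M\<^esub> q \<in> S"
    using p(1) S(1) a(1) q(1) by blast
  have "h a \<otimes>\<^bsub>G Mod G0\<^esub> h q = h (a \<otimes>\<^bsub>M\<^esub> q)"
    by (rule h.hom_mult[symmetric, OF a(1) q(1)])
  also have "\<dots> = component (f (a \<otimes>\<^bsub>M\<^esub> q))"
    using h(2) \<open>a \<otimes>\<^bsub>M\<^esub> q \<in> S\<close> by blast
  also have "\<dots> = component (f a)"
    using aq bounds(2) by (intro component_eq_if_dist_less[OF r]) simp
  also have "\<dots> = h a"
    using h(2) a_S by simp
  finally have "h q = \<one>\<^bsub>G Mod G0\<^esub>"
    using h.H.l_cancel_one[OF h.hom_closed[OF a(1)] h.hom_closed[OF q(1)]] by blast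
  then show "q \<in> kernel M (G Mod G0) h"
    using q(1) by (simp add: kernel_def)
qed

lemma generate_ball_preimage_subset_kernel:
  assumes r: "ball \<one> r \<subseteq> G0"
    and h: "h \<in> hom M (G Mod G0)" "\<forall>s\<in>S. h s = component (f s)"
    and S: "generate G S0 = carrier G" "f -` S0 \<inter> carrier M \<subseteq> S" "\<And>s. s \<in> S \<Longrightarrow> dist \<one> (f s) < R"
    and P: "component ` P = component ` S0" "\<And>p. p \<in> P \<Longrightarrow> ball p \<rho> \<subseteq> S0"
      "\<And>p. p \<in> P \<Longrightarrow> dist \<one> p < R"
    and small_generates: "ball_preimage r \<subseteq> generate M (ball_preimage \<theta>)"
    and bounds: "\<theta> \<le> r" "2 * \<epsilon> + \<theta> < \<rho>" "\<theta> + \<epsilon> < r" "\<theta> + 2 * \<epsilon> < R"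
  shows "generate M (ball_preimage r) \<subseteq> kernel M (G Mod G0) h"
proof -
  interpret h: group_hom M "G Mod G0" h
    using h(1) by (rule group_hom_component_group)
  show ?thesis
  proof (cases "P = {}")
    case True
    have "carrier (G Mod G0) = {\<one>\<^bsub>G Mod G0\<^esub>}"
      using True P(1) S(1) by (intro component_group_trivial) simp
    then have "h x = \<one>\<^bsub>G Mod G0\<^esub>" if "x \<in> carrier M" for x
      using h.hom_closed[OF that] by blast
    then show ?thesis
      using M.generate_incl[of "ball_preimage r"] unfolding kernel_def by blast
  next
    case False
    obtain p where "p \<in> P"
      using False by blast
    have "ball_preimage \<theta> \<subseteq> kernel M (G Mod G0) h"
      by (rule ball_preimage_subset_kernel[OF r h S(2,3) P(2)[OF \<open>p \<in> P\<close>] P(3)[OF \<open>p \<in> P\<close>] bounds(2-4)])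
    then show ?thesis
      unfolding generate_ball_preimage_eq[OF small_generates bounds(1)]
      by (rule M.generate_subgroup_incl[OF _ h.subgroup_kernel])
  qed
qed

lemma hom_onto_component_group:
  assumes r: "ball \<one> r \<subseteq> G0"
    and h: "h \<in> hom M (G Mod G0)" "\<forall>s\<in>S. h s = component (f s)"
    and S0: "generate G S0 = carrier G" "f -` S0 \<inter> carrier M \<subseteq> S"
    and P: "component ` P = component ` S0" "\<And>p. p \<in> P \<Longrightarrow> ball p \<rho> \<subseteq> S0"
      "\<And>p. p \<in> P \<Longrightarrow> dist \<one> p < R"
    and bounds: "\<epsilon> < \<rho>" "\<rho> \<le> r"
  shows "h ` carrier M = carrier (G Mod G0)"
proof
  interpret h: group_hom M "G Mod G0" h
    using h(1) by (rule group_hom_component_group)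
  show "h ` carrier M \<subseteq> carrier (G Mod G0)"
    by auto
  have "component ` S0 \<subseteq> h ` carrier M"
  proof
    fix y assume "y \<in> component ` S0"
    then obtain p where p: "p \<in> P" "y = component p"
      using P(1) by (metis imageE)
    obtain a where a: "a \<in> carrier M" "dist p (f a) < \<epsilon>"
      using almost_onto[OF P(3)[OF p(1)]] by blast
    then have "f a \<in> ball p \<rho>"
      using bounds(1) by simp
    then have "a \<in> S"
      using P(2)[OF p(1)] S0(2) a(1) by blast
    then have "h a = component (f a)"
      using h(2) by blast
    also have "\<dots> = y"
      unfolding p(2) using a(2) bounds
      by (intro component_eq_if_dist_less[OF r]) (simp add: dist_commute)
    finally show "y \<in> h ` carrier M"
      using a(1) by blast
  qed
  then have "generate (G Mod G0) (component ` S0) \<subseteq> h ` carrier M"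
    by (intro group.generate_subgroup_incl[OF group_component_group] h.img_is_subgroup)
  moreover have "generate (G Mod G0) (component ` S0) = component ` generate G S0"
    by (rule group_hom.generate_img[OF group_hom_component]) (simp add: carrier_UNIV)
  ultimately show "carrier (G Mod G0) \<subseteq> h ` carrier M"
    using S0(1) by (simp add: carrier_component_group carrier_UNIV)
qed

lemma quotient_onto_component_group:
  assumes r: "ball \<one> r \<subseteq> G0"
    and S: "symmetric_subset M S" "determining_set M S"
      "f -` S0 \<inter> carrier M \<subseteq> S" "S \<subseteq> f -` K \<inter> carrier M"
    and S0: "generate G S0 = carrier G" "S0 \<subseteq> K"
    and P: "P \<subseteq> S0" "component ` P = component ` S0" "\<And>p. p \<in> P \<Longrightarrow> ball p \<rho> \<subseteq> S0"
    and K: "\<And>\<beta>. \<beta> \<in> K \<Longrightarrow> dist \<one> \<beta> < RK"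
    and conj: "\<And>\<beta> w. \<beta> \<in> K \<Longrightarrow> dist w \<one> < \<theta>' \<Longrightarrow> dist (inv \<beta> \<otimes> w \<otimes> \<beta>) \<one> < r / 4"
    and chain: "\<And>y. y \<in> ball \<one> r \<Longrightarrow> chain_reachable (\<theta> / 2) R1 y" "R1 > 0"
    and bounds: "\<theta> > 0" "10 * \<epsilon> \<le> \<theta>" "2 * \<theta> \<le> \<rho>" "\<rho> \<le> r" "2 * \<theta> \<le> \<theta>'"
      "0 \<le> RK" "R1 + RK + 2 * r < R"
  shows "let N = generate M (ball_preimage r) in N \<lhd> M \<and>
    (\<exists>h. h \<in> hom (M Mod N) (G Mod G0) \<and> h ` carrier (M Mod N) = carrier (G Mod G0))"
proof -
  obtain Rel where Rel: "has_presentation M S Rel" "\<And>w. w \<in> Rel \<Longrightarrow> length w = 3"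
    using S(2) unfolding determining_set_def by blast
  have S_carrier: "S \<subseteq> carrier M" and S_generates: "generate M S = carrier M"
    using S(2) unfolding determining_set_def by blast+
  have S_inv: "\<And>s. s \<in> S \<Longrightarrow> inv\<^bsub>M\<^esub> s \<in> S"
    using S(1) unfolding symmetric_subset_def by blast
  have S_K: "f ` S \<subseteq> K"
    using S(4) by blast
  have S_R: "\<And>s. s \<in> S \<Longrightarrow> dist \<one> (f s) < R"
    using S_K K bounds chain(2) by fastforce
  have P_R: "\<And>p. p \<in> P \<Longrightarrow> dist \<one> p < R"
    using P(1) S0(2) K bounds chain(2) by fastforce
  have small_generates: "ball_preimage r \<subseteq> generate M (ball_preimage \<theta>)"
    by (rule ball_preimage_subset_generate[OF chain]) (use bounds chain(2) eps_pos in linarith)+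
  have normal: "generate M (ball_preimage r) \<lhd> M"
    by (rule generate_ball_preimage_normal[where \<theta>' = \<theta>',
          OF S_carrier S_generates S_inv S_K K conj small_generates])
      (use bounds chain(2) eps_pos in linarith)+
  obtain h where h: "h \<in> hom M (G Mod G0)" "\<forall>s\<in>S. h s = component (f s)"
    using hom_to_component_group[OF r _ S_carrier S_inv S_R Rel] bounds by fastforce
  interpret h: group_hom M "G Mod G0" h
    using h(1) by (rule group_hom_component_group)
  have "generate M (ball_preimage r) \<subseteq> kernel M (G Mod G0) h"
    by (rule generate_ball_preimage_subset_kernel[OF r h S0(1) S(3) S_R P(2,3) P_R small_generates])
      (use bounds chain(2) eps_pos in linarith)+
  moreover have "h ` carrier M = carrier (G Mod G0)"
    by (rule hom_onto_component_group[OF r h S0(1) S(3) P(2,3) P_R]) (use bounds eps_pos in linarith)+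
  ultimately show ?thesis
    unfolding Let_def using normal h.FactGroup_hom_image by metis
qed

end

lemma (in metric_group) eventually_quotient_onto_component_group:
  fixes \<Gamma>s :: "nat \<Rightarrow> ('a, 'c) monoid_scheme" and f :: "nat \<Rightarrow> 'a \<Rightarrow> 'g"
  assumes r: "r > 0" "ball \<one> r \<subseteq> G0" "totally_bounded (ball \<one> r)"
    and S0: "open S0" "generate G S0 = carrier G" "compact K" "S0 \<subseteq> K"
    and approx: "\<And>\<epsilon>. \<epsilon> > 0 \<Longrightarrow>
      \<exists>R0. \<forall>R\<ge>R0. \<forall>\<^sub>F i in sequentially. approximation_at_scale G (\<Gamma>s i) (f i) R \<epsilon>"
    and clean: "\<forall>\<^sub>F i in sequentially. \<exists>S. symmetric_subset (\<Gamma>s i) S \<and> determining_set (\<Gamma>s i) S \<and>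
      f i -` S0 \<inter> carrier (\<Gamma>s i) \<subseteq> S \<and> S \<subseteq> f i -` K \<inter> carrier (\<Gamma>s i)"
  shows "\<forall>\<^sub>F i in sequentially.
    let N = generate (\<Gamma>s i) (f i -` ball \<one> r \<inter> carrier (\<Gamma>s i)) in N \<lhd> \<Gamma>s i \<and>
      (\<exists>h. h \<in> hom (\<Gamma>s i Mod N) (G Mod G0) \<and> h ` carrier (\<Gamma>s i Mod N) = carrier (G Mod G0))"
proof -
  obtain P \<rho>0 where P: "P \<subseteq> S0" "component ` P = component ` S0"
    "\<rho>0 > 0" "\<And>p. p \<in> P \<Longrightarrow> ball p \<rho>0 \<subseteq> S0"
    using component_representatives[OF S0(1,4,3)] by blast
  define \<rho> where "\<rho> = min \<rho>0 r"
  have \<rho>: "\<rho> > 0" "\<rho> \<le> r" "\<And>p. p \<in> P \<Longrightarrow> ball p \<rho> \<subseteq> S0"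
    unfolding \<rho>_def using P(3,4) r(1) by fastforce+
  obtain \<theta>' where \<theta>': "\<theta>' > 0"
    "\<And>\<beta> w. \<beta> \<in> K \<Longrightarrow> dist w \<one> < \<theta>' \<Longrightarrow> dist (inv \<beta> \<otimes> w \<otimes> \<beta>) \<one> < r / 4"
    using conjugation_small_on_compact[OF S0(3), of "r / 4"] r(1) by auto
  obtain RK where RK: "RK > 0" "K \<subseteq> ball \<one> RK"
    using bounded_subset_ballD[OF compact_imp_bounded[OF S0(3)]] by blast
  define \<theta> where "\<theta> = min (\<rho> / 2) (\<theta>' / 2)"
  have \<theta>: "\<theta> > 0" "2 * \<theta> \<le> \<rho>" "2 * \<theta> \<le> \<theta>'"
    unfolding \<theta>_def using \<rho>(1) \<theta>'(1) by auto
  obtain R1 where R1: "R1 > 0" "\<And>y. y \<in> ball \<one> r \<Longrightarrow> chain_reachable (\<theta> / 2) R1 y"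
    using chain_reachable_uniform[OF _ r(1,3,2), of "\<theta> / 2"] \<theta>(1) by auto
  define \<epsilon> where "\<epsilon> = \<theta> / 10"
  define R where "R = R1 + RK + 2 * r + 1"
  have "\<epsilon> > 0"
    unfolding \<epsilon>_def using \<theta>(1) by simp
  then obtain R0 where "\<forall>R'\<ge>R0. \<forall>\<^sub>F i in sequentially. approximation_at_scale G (\<Gamma>s i) (f i) R' \<epsilon>"
    using approx by blast
  then have "\<forall>\<^sub>F i in sequentially. approximation_at_scale G (\<Gamma>s i) (f i) (max R R0) \<epsilon>"
    by simp
  with clean show ?thesis
  proof eventually_elim
    case (elim i)
    then obtain S where S: "symmetric_subset (\<Gamma>s i) S" "determining_set (\<Gamma>s i) S"
      "f i -` S0 \<inter> carrier (\<Gamma>s i) \<subseteq> S" "S \<subseteq> f i -` K \<inter> carrier (\<Gamma>s i)"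
      by blast
    interpret approximation_at_scale G "\<Gamma>s i" "f i" "max R R0" \<epsilon>
      by (fact elim(2))
    show ?case
      using RK(2) RK(1) r(1) \<theta> \<rho>(2) R1(1)
      by (intro quotient_onto_component_group[where \<theta>' = \<theta>', OF r(2) S S0(2,4) P(1,2) \<rho>(3) _ \<theta>'(2) R1(2)])
        (auto simp: \<epsilon>_def R_def)
  qed
qed


section \<open>Discrete approximations of Lie groups\<close>

lemma discrete_approximation_eventually:
  fixes \<Gamma> :: "'g::metric_space monoid"
  assumes "discrete_approximation \<Gamma>s \<Gamma> f" "R > 0" "\<epsilon> > 0"
  shows "\<forall>\<^sub>F i in sequentially. finite (f i -` ball \<one>\<^bsub>\<Gamma>\<^esub> R \<inter> carrier (\<Gamma>s i))"
    and "\<forall>\<^sub>F i in sequentially. \<forall>x\<in>ball \<one>\<^bsub>\<Gamma>\<^esub> R. \<exists>g\<in>carrier (\<Gamma>s i). dist x (f i g) < \<epsilon>"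
    and "\<forall>\<^sub>F i in sequentially. \<forall>g1\<in>f i -` ball \<one>\<^bsub>\<Gamma>\<^esub> R \<inter> carrier (\<Gamma>s i).
      \<forall>g2\<in>f i -` ball \<one>\<^bsub>\<Gamma>\<^esub> R \<inter> carrier (\<Gamma>s i).
        dist (f i (g1 \<otimes>\<^bsub>\<Gamma>s i\<^esub> inv\<^bsub>\<Gamma>s i\<^esub> g2)) (f i g1 \<otimes>\<^bsub>\<Gamma>\<^esub> f i (inv\<^bsub>\<Gamma>s i\<^esub> g2)) \<le> \<epsilon>"
  using assms unfolding discrete_approximation_def mem_ball eventually_conj_iff by blast+

text \<open>The images of the finite sets \<open>f i -` ball \<one> (R + e)\<close> are \<open>e\<close>-nets of \<open>ball \<one> R\<close>.\<close>

lemma discrete_approximation_totally_bounded_ball: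
  fixes \<Gamma> :: "'g::metric_space monoid"
  assumes "discrete_approximation \<Gamma>s \<Gamma> f"
  shows "totally_bounded (ball \<one>\<^bsub>\<Gamma>\<^esub> R)"
  unfolding totally_bounded_metric
proof (intro allI impI)
  fix e :: real assume "e > 0"
  define R' where "R' = \<bar>R\<bar> + e"
  have "R' > 0"
    unfolding R'_def using \<open>e > 0\<close> by simp
  obtain i where i: "finite (f i -` ball \<one>\<^bsub>\<Gamma>\<^esub> R' \<inter> carrier (\<Gamma>s i))"
    "\<forall>x\<in>ball \<one>\<^bsub>\<Gamma>\<^esub> R'. \<exists>g\<in>carrier (\<Gamma>s i). dist x (f i g) < e"
    using eventually_happens'[OF sequentially_bot eventually_conj[OF
        discrete_approximation_eventually(1,2)[OF assms \<open>R' > 0\<close> \<open>e > 0\<close>]]]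
    by blast
  define k where "k = f i ` (f i -` ball \<one>\<^bsub>\<Gamma>\<^esub> R' \<inter> carrier (\<Gamma>s i))"
  have "ball \<one>\<^bsub>\<Gamma>\<^esub> R \<subseteq> (\<Union>x\<in>k. {y. dist x y < e})"
  proof
    fix y assume y: "y \<in> ball \<one>\<^bsub>\<Gamma>\<^esub> R"
    then have "y \<in> ball \<one>\<^bsub>\<Gamma>\<^esub> R'"
      unfolding R'_def using \<open>e > 0\<close> by simp
    then obtain g where g: "g \<in> carrier (\<Gamma>s i)" "dist y (f i g) < e"
      using i(2) by blast
    have "dist \<one>\<^bsub>\<Gamma>\<^esub> (f i g) \<le> dist \<one>\<^bsub>\<Gamma>\<^esub> y + dist y (f i g)"
      by (rule dist_triangle)
    then have "f i g \<in> k"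
      unfolding k_def R'_def using y g by auto
    then show "y \<in> (\<Union>x\<in>k. {y. dist x y < e})"
      using g(2) by (auto simp: dist_commute)
  qed
  then show "\<exists>k. finite k \<and> ball \<one>\<^bsub>\<Gamma>\<^esub> R \<subseteq> (\<Union>x\<in>k. {y. dist x y < e})"
    unfolding k_def using i(1) by blast
qed

lemma discrete_approximation_open_subset:
  fixes \<Gamma> :: "'g::metric_space monoid"
  assumes "discrete_approximation \<Gamma>s \<Gamma> f" "open U" "closed K"
    and "\<forall>\<^sub>F i in sequentially. f i -` U \<inter> carrier (\<Gamma>s i) \<subseteq> f i -` K"
  shows "U \<subseteq> K"
proof
  fix x assume "x \<in> U"
  show "x \<in> K"
  proof (rule ccontr)
    assume "x \<notin> K"
    then obtain e where "e > 0" "ball x e \<subseteq> U - K"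
      using \<open>x \<in> U\<close> assms(2,3) open_contains_ball[of "U - K"] by blast
    have "dist \<one>\<^bsub>\<Gamma>\<^esub> x + 1 > 0"
      by (simp add: add_nonneg_pos)
    then obtain i where i: "f i -` U \<inter> carrier (\<Gamma>s i) \<subseteq> f i -` K"
      "\<forall>y\<in>ball \<one>\<^bsub>\<Gamma>\<^esub> (dist \<one>\<^bsub>\<Gamma>\<^esub> x + 1). \<exists>g\<in>carrier (\<Gamma>s i). dist y (f i g) < e"
      using eventually_happens'[OF sequentially_bot eventually_conj[OF assms(4)
          discrete_approximation_eventually(2)[OF assms(1) _ \<open>e > 0\<close>]]]
      by blast
    then obtain g where "g \<in> carrier (\<Gamma>s i)" "f i g \<in> ball x e"
      by fastforce
    then show False
      using i(1) \<open>ball x e \<subseteq> U - K\<close> by blast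
  qed
qed

lemma eventually_approximation_at_scale:
  fixes \<Gamma> :: "'g::metric_space monoid"
  assumes "metric_group \<Gamma>" "\<And>i. group (\<Gamma>s i)" "discrete_approximation \<Gamma>s \<Gamma> f" "\<epsilon> > 0"
  shows "\<exists>R0. \<forall>R\<ge>R0. \<forall>\<^sub>F i in sequentially. approximation_at_scale \<Gamma> (\<Gamma>s i) (f i) R \<epsilon>"
proof -
  obtain R0 where R0: "R0 > 0" "\<forall>\<^sub>F i in sequentially. dist \<one>\<^bsub>\<Gamma>\<^esub> (f i \<one>\<^bsub>\<Gamma>s i\<^esub>) < R0"
    using assms(3) unfolding discrete_approximation_def eventually_conj_iff vimage_eq mem_ball by blast
  have "\<forall>\<^sub>F i in sequentially. approximation_at_scale \<Gamma> (\<Gamma>s i) (f i) R \<epsilon>" if "R0 \<le> R" for R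
  proof -
    have "R > 0"
      using R0(1) that by simp
    show ?thesis
      using R0(2) discrete_approximation_eventually(2,3)[OF assms(3) \<open>R > 0\<close> assms(4)]
    proof eventually_elim
      case (elim i)
      show ?case
        by (intro approximation_at_scale.intro approximation_at_scale_axioms.intro assms(1,2,4))
          (use elim that in auto)
    qed
  qed
  then show ?thesis
    by blast
qed

lemma connected_open_nhd_chart:
  assumes "is_chart U \<phi>" "x \<in> U"
  shows "\<exists>V. open V \<and> connected V \<and> x \<in> V"
proof -
  have U: "open U" "inj_on \<phi> U" "open (\<phi> ` U)" "continuous_on U \<phi>"
    "continuous_on (\<phi> ` U) (inv_into U \<phi>)"
    using assms(1) unfolding is_chart_def by blast+
  obtain \<rho> where \<rho>: "\<rho> > 0" "ball (\<phi> x) \<rho> \<subseteq> \<phi> ` U"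
    using U(3) assms(2) open_contains_ball by blast
  define V where "V = inv_into U \<phi> ` ball (\<phi> x) \<rho>"
  have V: "V = U \<inter> \<phi> -` ball (\<phi> x) \<rho>"
  proof
    show "V \<subseteq> U \<inter> \<phi> -` ball (\<phi> x) \<rho>"
      unfolding V_def using \<rho>(2) by (auto intro: inv_into_into simp: f_inv_into_f subset_iff)
    show "U \<inter> \<phi> -` ball (\<phi> x) \<rho> \<subseteq> V"
    proof
      fix y assume y: "y \<in> U \<inter> \<phi> -` ball (\<phi> x) \<rho>"
      then have "y = inv_into U \<phi> (\<phi> y)"
        using inv_into_f_f[OF U(2)] by simp
      then show "y \<in> V"
        unfolding V_def using y by blast
    qed
  qed
  have "open V"
    unfolding V using continuous_open_preimage[OF U(4,1) open_ball] .
  moreover have "connected V"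
    unfolding V_def by (rule connected_continuous_image[OF continuous_on_subset[OF U(5) \<rho>(2)]]) simp
  moreover have "x \<in> V"
    unfolding V using assms(2) \<rho>(1) by simp
  ultimately show ?thesis
    by blast
qed

lemma continuous_on_if_open_singletons:
  fixes h :: "'a::topological_space \<Rightarrow> 'b::topological_space"
  assumes "\<And>x::'a. open {x}"
  shows "continuous_on UNIV h"
proof -
  have "open A" for A :: "'a set"
  proof -
    have "open (\<Union>x\<in>A. {x})"
      by (intro open_UN ballI assms)
    then show ?thesis
      by simp
  qed
  then show ?thesis
    unfolding continuous_on_open_invariant by blast
qed

lemma lie_group_modelled_on_connected_open_nhd:
  fixes \<Gamma> :: "'g::metric_space monoid" and x :: 'g
  assumes "lie_group_modelled_on TYPE('e::euclidean_space) \<Gamma>"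
  shows "\<exists>V. open V \<and> connected V \<and> x \<in> V"
proof -
  obtain A :: "('g set \<times> ('g \<Rightarrow> 'e)) set" where A: "smooth_atlas A"
    using assms unfolding lie_group_modelled_on_def by blast
  then have "x \<in> (\<Union>(U, \<phi>)\<in>A. U)"
    unfolding smooth_atlas_def by blast
  then obtain U \<phi> where "(U, \<phi>) \<in> A" "x \<in> U"
    by blast
  moreover from this(1) have "is_chart U \<phi>"
    using A unfolding smooth_atlas_def by blast
  ultimately show ?thesis
    using connected_open_nhd_chart by blast
qed

lemma lie_group_metric_group:
  fixes \<Gamma> :: "'g::metric_space monoid"
  assumes "lie_group TYPE('e::euclidean_space) \<Gamma>" "left_invariant_metric \<Gamma>"
  shows "metric_group \<Gamma>"
proof -
  have group: "group \<Gamma>" and carrier: "carrier \<Gamma> = UNIV"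
    using assms(1) unfolding lie_group_def discrete_lie_group_def lie_group_modelled_on_def
    by (elim disjE conjE; simp)+
  have "continuous_on UNIV (\<lambda>(x, y). x \<otimes>\<^bsub>\<Gamma>\<^esub> y) \<and> continuous_on UNIV (\<lambda>x. inv\<^bsub>\<Gamma>\<^esub> x) \<and>
      (\<forall>x::'g. \<exists>V. open V \<and> connected V \<and> x \<in> V)"
  proof (cases "discrete_lie_group \<Gamma>")
    case True
    then have points: "open {x}" for x :: 'g
      unfolding discrete_lie_group_def by blast
    then have pairs: "open {p}" for p :: "'g \<times> 'g"
      using open_Times[OF points points, of "fst p" "snd p"] by simp
    have "\<exists>V. open V \<and> connected V \<and> x \<in> V" for x :: 'g
      using points[of x] connected_sing[of x] by blast
    then show ?thesis
      using continuous_on_if_open_singletons[OF pairs] continuous_on_if_open_singletons[OF points]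
      by blast
  next
    case False
    then have modelled: "lie_group_modelled_on TYPE('e) \<Gamma>"
      using assms(1) unfolding lie_group_def by blast
    then have "continuous_on UNIV (\<lambda>(x, y). x \<otimes>\<^bsub>\<Gamma>\<^esub> y)" "continuous_on UNIV (\<lambda>x. inv\<^bsub>\<Gamma>\<^esub> x)"
      unfolding lie_group_modelled_on_def by blast+
    then show ?thesis
      using lie_group_modelled_on_connected_open_nhd[OF modelled] by blast
  qed
  moreover have "dist (g \<otimes>\<^bsub>\<Gamma>\<^esub> x) (g \<otimes>\<^bsub>\<Gamma>\<^esub> y) = dist x y" for g x y
    using assms(2) carrier unfolding left_invariant_metric_def by simp
  ultimately show ?thesis
    by (intro metric_group.intro metric_group_axioms.intro group carrier) blast+
qed

theorem mainTheorem14: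
  fixes \<Gamma> :: "'g::metric_space monoid"
    and \<Gamma>s :: "nat \<Rightarrow> 'a monoid"
    and f :: "nat \<Rightarrow> 'a \<Rightarrow> 'g"
    and r :: real
  assumes "lie_group TYPE('e::euclidean_space) \<Gamma>"
    and "left_invariant_metric \<Gamma>"
    and "\<And>i. group (\<Gamma>s i)"
    and "clean_discrete_approximation \<Gamma>s \<Gamma> f"
    and "r > 0"
    and "ball \<one>\<^bsub>\<Gamma>\<^esub> r \<subseteq> connected_component_set UNIV \<one>\<^bsub>\<Gamma>\<^esub>"
  shows "\<forall>\<^sub>F i in sequentially.
           let G = generate (\<Gamma>s i) (f i -` ball \<one>\<^bsub>\<Gamma>\<^esub> r \<inter> carrier (\<Gamma>s i)) in
           G \<lhd> \<Gamma>s i \<and>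
           (\<exists>h. h \<in> hom (\<Gamma>s i Mod G) (\<Gamma> Mod connected_component_set UNIV \<one>\<^bsub>\<Gamma>\<^esub>) \<and>
                h ` carrier (\<Gamma>s i Mod G) = carrier (\<Gamma> Mod connected_component_set UNIV \<one>\<^bsub>\<Gamma>\<^esub>))"
proof -
  interpret metric_group \<Gamma>
    using assms(1,2) by (rule lie_group_metric_group)
  have approx: "discrete_approximation \<Gamma>s \<Gamma> f"
    using assms(4) unfolding clean_discrete_approximation_def by blast
  obtain S0 K0 where S0: "open S0" "generate \<Gamma> S0 = carrier \<Gamma>" "compact K0"
    and clean: "\<forall>\<^sub>F i in sequentially. \<exists>S. symmetric_subset (\<Gamma>s i) S \<and> determining_set (\<Gamma>s i) S \<and>
        f i -` S0 \<inter> carrier (\<Gamma>s i) \<subseteq> S \<and> S \<subseteq> f i -` K0 \<inter> carrier (\<Gamma>s i)"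
    using assms(4) unfolding clean_discrete_approximation_def by blast
  have "\<forall>\<^sub>F i in sequentially. f i -` S0 \<inter> carrier (\<Gamma>s i) \<subseteq> f i -` K0"
    using clean by (rule eventually_mono) blast
  then have "S0 \<subseteq> K0"
    by (rule discrete_approximation_open_subset[OF approx S0(1) compact_imp_closed[OF S0(3)]])
  then show ?thesis
    using assms(6) eventually_approximation_at_scale[OF metric_group_axioms assms(3) approx]
    unfolding G0_def[symmetric]
    by (intro eventually_quotient_onto_component_group[OF assms(5) _
          discrete_approximation_totally_bounded_ball[OF approx] S0 _ _ clean])
qed

end
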